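(* Let $0.8<t<1$, $P=(0,t)$, $Q=(0,-t)$, and let $-1<r'<\frac{t-1}{t+1}$, $R'=(r',0)$. Then $\rho(\psi_{\triangle PQR'})<\frac{2}{5}$.
   Context: $D$ is the open unit disk in $\mathbb R^2$, $S^1$ its boundary circle identified with $\mathbb R/\mathbb Z$ via the counterclockwise normalized angle. For a closed convex $U\subset D$ and $v\in S^1$, $\psi_U(v)$ is the point $w\in S^1\setminus\{v\}$ such that the line $vw$ meets $U$ and $U$ lies in the closed half-plane to the left of the directed line from $v$ to $w$; it is an orientation-preserving homeomorphism of $S^1$; $\triangle PQR'$ denotes the closed filled triangle. For such $f$, $\rho(f)=\lim_{n\to\infty}(\overline f^n(x)-x)/n$ with $\overline f$ the lift to $\mathbb R$ satisfying $\overline f(0)\in[0,1)$. *)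

theory Defs
  imports "HOL-Analysis.Analysis"
begin

text \<open>The plane R^2 is modelled by the complex numbers; D = ball 0 1, S^1 = sphere 0 1.
  The angle coordinate x in R (mod Z) corresponds to the point cis (2 pi x).\<close>

definition circ_pt :: "real \<Rightarrow> complex" where
  "circ_pt x = cis (2 * pi * x)"

text \<open>Signed cross product (w - v) x (z - v): nonnegative iff z lies in the closed
  half-plane to the left of the directed line from v to w; zero iff z is on the line vw.\<close>
definition cross3 :: "complex \<Rightarrow> complex \<Rightarrow> complex \<Rightarrow> real" where
  "cross3 v w z = Im (cnj (w - v) * (z - v))"

definition psi :: "complex set \<Rightarrow> complex \<Rightarrow> complex" where
  "psi U v = (THE w. w \<in> sphere 0 1 \<and> w \<noteq> v \<and> (\<exists>z\<in>U. cross3 v w z = 0)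
                    \<and> (\<forall>z\<in>U. cross3 v w z \<ge> 0))"

definition circle_lift :: "(complex \<Rightarrow> complex) \<Rightarrow> real \<Rightarrow> real" where
  "circle_lift f = (THE F. continuous_on UNIV F \<and> (\<forall>x. circ_pt (F x) = f (circ_pt x))
                          \<and> 0 \<le> F 0 \<and> F 0 < 1)"

definition rot_num :: "(complex \<Rightarrow> complex) \<Rightarrow> real" where
  "rot_num f = (THE \<rho>. \<forall>x. (\<lambda>n. (((circle_lift f) ^^ n) x - x) / real n) \<longlonglongrightarrow> \<rho>)"

end

(* Writing P = i t, Q = -i t and r0 = (t - 1)/(t + 1), the lift of psi for a triangle is the
   pointwise minimum of the lifts of the chord maps of its vertices, and each chord map is an
   involution of the circle.  For the critical triangle P Q r0 the fifth iterate of the lift F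
   satisfies F^5 x <= x + 2: every orbit enters [3/4, 5/4] mod 1 within two steps, and there
   F^5 is dominated by five-letter words in the chord lifts that reduce, by the involution
   property, to comparing two three-letter words.  Along a parametrisation of the window the
   sign of that comparison is the sign of an explicit polynomial in t and the parameter,
   which is certified positive for 4/5 < t < 1; equality holds only on the orbits of 3/4, 1
   and 5/4.  For r' < r0 the triangle P Q r' contains r0, so its lift F' is at most F, and
   strictly smaller at 5/4; an orbit with F'^5 x >= x + 2 would agree with an F-orbit for
   five steps and hence pass through 5/4 mod 1, where F' < F.  Hence F'^5 x < x + 2 for all x, by
   periodicity and compactness uniformly so, and the rotation number is below 2/5. *)

theory Submission
  imports Defs
begin

lemma circ_pt_norm [simp]: "norm (circ_pt x) = 1"
  by (simp add: circ_pt_def)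

lemma circ_pt_add_int:
  assumes "k \<in> \<int>" shows "circ_pt (x + k) = circ_pt x"
proof -
  have "circ_pt (x + k) = cis (2*pi*x) * cis (2*pi*k)"
    by (simp add: circ_pt_def cis_mult distrib_left)
  also have "cis (2*pi*k) = 1" using assms by simp
  finally show ?thesis by (simp add: circ_pt_def)
qed

lemma circ_pt_add_1 [simp]: "circ_pt (x + 1) = circ_pt x"
  using circ_pt_add_int[of 1 x] by simp

lemma circ_pt_mult_cnj: "circ_pt a * cnj (circ_pt b) = circ_pt (a - b)"
  by (simp add: circ_pt_def cis_cnj cis_mult right_diff_distrib)

lemma unit_mult_cnj: "norm v = 1 \<Longrightarrow> v * cnj v = 1"
  by (metis complex_norm_square mult.commute of_real_1 power_one)

lemma circ_pt_eq_imp_diff_Ints: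
  assumes "circ_pt a = circ_pt b" shows "a - b \<in> \<int>"
proof -
  have "circ_pt (a - b) = 1"
    using assms circ_pt_mult_cnj[of a b] unit_mult_cnj[of "circ_pt b"] by simp
  then have "cos (2*pi*(a-b)) = 1" by (metis circ_pt_def cis.sel(1) one_complex.sel(1))
  then obtain n :: int where "2*pi*(a-b) = real_of_int n*2*pi" using cos_one_2pi_int by metis
  then have "a - b = n" by simp
  then show ?thesis by simp
qed

lemma circ_pt_eq_imp_eq: "circ_pt y = circ_pt c \<Longrightarrow> \<bar>y - c\<bar> < 1 \<Longrightarrow> y = c"
proof -
  assume "circ_pt y = circ_pt c" "\<bar>y - c\<bar> < 1"
  then obtain k where k: "y - c = of_int k" using circ_pt_eq_imp_diff_Ints by (metis Ints_cases)
  then have "\<bar>of_int k :: real\<bar> < 1" using \<open>\<bar>y - c\<bar> < 1\<close> by simp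
  then have "k = 0" by linarith
  then show "y = c" using k by simp
qed

lemma one_minus_i_mult_nonzero: "1 - \<i> * complex_of_real m \<noteq> 0"
  by (simp add: complex_eq_iff)

lemma cis_double_arctan: "cis (2 * arctan q) = (1 + \<i> * q) / (1 - \<i> * q)"
proof -
  have ss: "(sqrt (1 + q\<^sup>2))\<^sup>2 = 1 + q\<^sup>2" by (simp add: add_nonneg_nonneg)
  have c: "cis (arctan q) = (1 + \<i> * q) / sqrt (1 + q\<^sup>2)"
    by (simp add: complex_eq_iff cos_arctan sin_arctan)
  have "cis (2 * arctan q) = (cis (arctan q))^2"
    by (simp only: power2_eq_square cis_mult mult_2)
  also have "\<dots> = (1 + \<i> * q)^2 / (1 + q\<^sup>2)"
  proof -
    have "(complex_of_real (sqrt (1 + q\<^sup>2)))\<^sup>2 = 1 + (complex_of_real q)\<^sup>2"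
      by (metis ss of_real_add of_real_1 of_real_power)
    then show ?thesis by (simp add: c power_divide)
  qed
  also have "\<dots> = (1 + \<i> * q) / (1 - \<i> * q)"
  proof -
    have "(1 + \<i> * q)^2 * (1 - \<i> * q) = (1 + \<i> * q) * (1 + q\<^sup>2)"
      by (simp add: algebra_simps power2_eq_square)
    moreover have "complex_of_real (1 + q\<^sup>2) \<noteq> 0"
      by (metis add_pos_nonneg less_numeral_extra(1) of_real_eq_0_iff order_less_irrefl zero_le_power2)
    ultimately show ?thesis using one_minus_i_mult_nonzero[of q] by (simp add: field_simps)
  qed
  finally show ?thesis .
qed

section \<open>Chord maps\<close>

text \<open>For z in the disk, chord_map z is psi for the one-point set {z}: it sends v on the
  circle to the other end point of the chord through v and z, and chord_lift z is its lift.
  The chord from v to slope_point v m makes the angle arctan m with the radius from v to 0.\<close>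

definition chord_slope :: "complex \<Rightarrow> complex \<Rightarrow> real" where
  "chord_slope z v = Im (1 - z * cnj v) / Re (1 - z * cnj v)"

definition chord_lift :: "complex \<Rightarrow> real \<Rightarrow> real" where
  "chord_lift z x = x + 1/2 + arctan (chord_slope z (circ_pt x)) / pi"

definition chord_map :: "complex \<Rightarrow> complex \<Rightarrow> complex" where
  "chord_map z v = (z - v) / (1 - cnj z * v)"

definition slope_point :: "complex \<Rightarrow> real \<Rightarrow> complex" where
  "slope_point v m = - v * ((1 + \<i> * m) / (1 - \<i> * m))"

lemma Re_one_minus_mult_cnj_pos:
  assumes "norm z < 1" "norm v \<le> 1" shows "0 < Re (1 - z * cnj v)"
proof -
  have "Re (z * cnj v) \<le> norm z * norm v" using complex_Re_le_cmod[of "z * cnj v"] by (simp add: norm_mult)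
  also have "\<dots> \<le> norm z" using assms(2) by (simp add: mult_left_le)
  also have "\<dots> < 1" by (rule assms(1))
  finally show ?thesis by simp
qed

lemma Im_eq_chord_slope_mult:
  "norm z < 1 \<Longrightarrow> norm v \<le> 1 \<Longrightarrow> Im (1 - z * cnj v) = chord_slope z v * Re (1 - z * cnj v)"
  using Re_one_minus_mult_cnj_pos[of z v] by (simp add: chord_slope_def)

lemma circ_pt_add_arctan: "circ_pt (x + 1/2 + arctan m / pi) = slope_point (circ_pt x) m"
proof -
  have "2*pi*(x + 1/2 + arctan m / pi) = (2*pi*x + 2 * arctan m) + pi"
    by (simp add: field_simps)
  then have "circ_pt (x + 1/2 + arctan m / pi) = - cis (2*pi*x + 2 * arctan m)"
    unfolding circ_pt_def by (simp add: minus_cis[symmetric])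
  also have "\<dots> = - cis (2*pi*x) * cis (2 * arctan m)" by (simp add: cis_mult)
  finally show ?thesis by (simp add: slope_point_def cis_double_arctan circ_pt_def)
qed

lemma chord_lift_add_int: "k \<in> \<int> \<Longrightarrow> chord_lift z (x + k) = chord_lift z x + k"
  by (simp add: chord_lift_def circ_pt_add_int)

lemma chord_lift_add_1: "chord_lift z (x + 1) = chord_lift z x + 1"
  using chord_lift_add_int[of 1] by simp

lemma arctan_div_pi_bounds: "- 1/2 < arctan m / pi" "arctan m / pi < 1/2"
  using arctan_bounded[of m] pi_gt_zero by (auto simp: field_simps)

lemma chord_lift_bounds: "x < chord_lift z x" "chord_lift z x < x + 1"
  using arctan_div_pi_bounds[of "chord_slope z (circ_pt x)"] unfolding chord_lift_def by linarith+

lemma chord_lift_le_iff: "chord_lift a x \<le> chord_lift b x \<longleftrightarrow> chord_slope a (circ_pt x) \<le> chord_slope b (circ_pt x)"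
  unfolding chord_lift_def using pi_gt_zero by (simp add: divide_le_cancel arctan_le_iff)

lemma chord_map_denom_nonzero: assumes "norm z < 1" "norm v = 1" shows "1 - cnj z * v \<noteq> 0"
proof
  assume "1 - cnj z * v = 0"
  then have "norm (cnj z * v) = 1" by (metis eq_iff_diff_eq_0 norm_one)
  then show False using assms by (simp add: norm_mult)
qed

lemma slope_point_chord_slope:
  assumes "norm z < 1" "norm v = 1"
  shows "slope_point v (chord_slope z v) = chord_map z v"
proof -
  define u where "u = 1 - z * cnj v"
  have "0 < Re u" using Re_one_minus_mult_cnj_pos[of z v] assms by (simp add: u_def)
  then have r: "complex_of_real (Re u) \<noteq> 0" by simp
  have "1 + \<i> * (Im u / Re u) = u / Re u" "1 - \<i> * (Im u / Re u) = cnj u / Re u"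
    using r by (simp_all add: complex_eq_iff field_simps)
  then have q: "(1 + \<i> * (Im u / Re u)) / (1 - \<i> * (Im u / Re u)) = u / cnj u"
    using r by simp
  have "- v * u = z - v"
    using unit_mult_cnj[OF assms(2)] by (simp add: u_def algebra_simps)
  moreover have "cnj u = 1 - cnj z * v" by (simp add: u_def)
  ultimately have "- v * (u / cnj u) = chord_map z v"
    by (simp only: chord_map_def times_divide_eq_right)
  then show ?thesis
    unfolding slope_point_def chord_slope_def u_def[symmetric] q .
qed

lemma circ_pt_chord_lift: "norm z < 1 \<Longrightarrow> circ_pt (chord_lift z x) = chord_map z (circ_pt x)"
  by (simp add: chord_lift_def circ_pt_add_arctan slope_point_chord_slope)

lemma norm_chord_map: assumes "norm z < 1" "norm v = 1" shows "norm (chord_map z v) = 1"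
proof -
  have "z - v = - v * (1 - z * cnj v)" using unit_mult_cnj[OF assms(2)] by (simp add: algebra_simps)
  then have "norm (z - v) = norm (1 - z * cnj v)" using assms(2) by (simp add: norm_mult)
  also have "\<dots> = norm (cnj (1 - z * cnj v))" by (rule complex_mod_cnj[symmetric])
  also have "cnj (1 - z * cnj v) = 1 - cnj z * v" by simp
  finally show ?thesis using chord_map_denom_nonzero[OF assms] by (simp add: chord_map_def norm_divide)
qed

lemma chord_map_involution: assumes "norm z < 1" "norm v = 1" shows "chord_map z (chord_map z v) = v"
proof -
  have d: "1 - cnj z * v \<noteq> 0" using chord_map_denom_nonzero[OF assms] .
  have "norm (z * cnj z) < 1"
    using assms(1) by (simp add: norm_mult) (metis abs_norm_cancel abs_square_less_1 power2_eq_square)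
  then have nz: "1 - z * cnj z \<noteq> 0" by auto
  have "1 - cnj z * ((z - v) / (1 - cnj z * v)) = (1 - z * cnj z) / (1 - cnj z * v)"
    "z - (z - v) / (1 - cnj z * v) = v * (1 - z * cnj z) / (1 - cnj z * v)"
    using d by (simp_all add: field_simps)
  then show ?thesis using nz d unfolding chord_map_def by simp
qed

lemma continuous_on_chord_lift: assumes "norm z < 1" shows "continuous_on UNIV (chord_lift z)"
proof -
  have "\<forall>x\<in>UNIV. Re (1 - z * cnj (circ_pt x)) \<noteq> 0"
    using Re_one_minus_mult_cnj_pos[OF assms] by (metis circ_pt_norm less_irrefl order_refl)
  then have "continuous_on UNIV (\<lambda>x. chord_slope z (circ_pt x))"
    unfolding chord_slope_def circ_pt_def by (intro continuous_intros) auto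
  then show ?thesis unfolding chord_lift_def[abs_def]
    by (intro continuous_intros) auto
qed

lemma continuous_inj_degree_one_strict_mono:
  fixes f :: "real \<Rightarrow> real"
  assumes c: "continuous_on UNIV f" and i: "inj f" and p: "\<And>x. f (x + 1) = f x + 1"
  shows "strict_mono f"
proof (rule strict_monoI)
  fix a b :: real assume ab: "a < b"
  show "f a < f b"
  proof (rule ccontr)
    assume "\<not> f a < f b"
    then have "f b < f a" using i ab by (metis inj_eq linorder_neqE_linordered_idom order_less_irrefl)
    have "(f a < f b \<and> f b < f (b+1)) \<or> (f (b+1) < f b \<and> f b < f a)"
      by (rule continuous_inj_imp_mono) (use ab c i in \<open>auto intro: continuous_on_subset inj_on_subset\<close>)
    then show False using \<open>f b < f a\<close> p[of b] by auto
  qed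
qed

lemma inj_chord_lift: assumes "norm z < 1" shows "inj (chord_lift z)"
proof (rule injI)
  fix x y assume e: "chord_lift z x = chord_lift z y"
  then have "chord_map z (circ_pt x) = chord_map z (circ_pt y)"
    using circ_pt_chord_lift[OF assms] by metis
  then have "circ_pt x = circ_pt y"
    using chord_map_involution[OF assms] by (metis circ_pt_norm)
  then obtain k where k: "x = y + of_int k"
    using circ_pt_eq_imp_diff_Ints by (metis Ints_cases add.commute diff_add_cancel)
  then have "k = 0" using e chord_lift_add_int[of "of_int k" z y] by simp
  then show "x = y" using k by simp
qed

lemma strict_mono_chord_lift: "norm z < 1 \<Longrightarrow> strict_mono (chord_lift z)"
  by (rule continuous_inj_degree_one_strict_mono)
    (auto simp: continuous_on_chord_lift inj_chord_lift chord_lift_add_1)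

lemma chord_lift_involution: assumes "norm z < 1" shows "chord_lift z (chord_lift z x) = x + 1"
proof -
  have "circ_pt (chord_lift z (chord_lift z x)) = circ_pt (x + 1)"
    using circ_pt_chord_lift[OF assms] chord_map_involution[OF assms] by simp
  moreover have "\<bar>chord_lift z (chord_lift z x) - (x + 1)\<bar> < 1"
    using chord_lift_bounds[where x=x and z=z] chord_lift_bounds[where x="chord_lift z x" and z=z] by auto
  ultimately show ?thesis by (rule circ_pt_eq_imp_eq)
qed

lemma chord_lift_pair_le:
  assumes "norm z1 < 1" "norm z2 < 1" "Z \<le> chord_lift z2 (chord_lift z1 y)"
  shows "chord_lift z1 (chord_lift z2 Z) \<le> y + 2"
proof -
  have "chord_lift z1 (chord_lift z2 Z) \<le> chord_lift z1 (chord_lift z2 (chord_lift z2 (chord_lift z1 y)))"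
    using assms strict_mono_chord_lift by (simp add: strict_mono_less_eq)
  also have "\<dots> = y + 2"
    using assms chord_lift_involution chord_lift_add_1 by simp
  finally show ?thesis .
qed

lemma chord_lift_pair_less:
  assumes "norm z1 < 1" "norm z2 < 1" "Z < chord_lift z2 (chord_lift z1 y)"
  shows "chord_lift z1 (chord_lift z2 Z) < y + 2"
proof -
  have "chord_lift z1 (chord_lift z2 Z) < chord_lift z1 (chord_lift z2 (chord_lift z2 (chord_lift z1 y)))"
    using assms strict_mono_chord_lift by (simp add: strict_mono_less)
  also have "\<dots> = y + 2"
    using assms chord_lift_involution chord_lift_add_1 by simp
  finally show ?thesis .
qed

lemma continuous_on_chord_lift_comp:
  "norm z < 1 \<Longrightarrow> continuous_on S f \<Longrightarrow> continuous_on S (\<lambda>x. chord_lift z (f x))"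
  using continuous_on_compose2[of UNIV "chord_lift z" S f] continuous_on_chord_lift by auto

section \<open>psi of a convex hull\<close>

lemma slope_point_minus: "slope_point v m - v = - v * (2 / (1 - \<i> * m))"
proof -
  have "(1 + \<i> * complex_of_real m) / (1 - \<i> * m) + 1 = 2 / (1 - \<i> * m)"
    using one_minus_i_mult_nonzero[of m] by (simp add: field_simps)
  moreover have "slope_point v m - v = - v * ((1 + \<i> * complex_of_real m) / (1 - \<i> * m) + 1)"
    unfolding slope_point_def by (simp add: distrib_left)
  ultimately show ?thesis by simp
qed

lemma cross3_slope_point:
  assumes "norm v = 1"
  shows "cross3 v (slope_point v m) z = 2 * Im ((1 - \<i> * m) * (1 - z * cnj v)) / (1 + m\<^sup>2)"
proof -
  have vv: "- cnj v * (z - v) = 1 - z * cnj v"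
    using unit_mult_cnj[OF assms] by (simp add: algebra_simps)
  have m2: "(1 - \<i> * complex_of_real m) * (1 + \<i> * m) = of_real (1 + m\<^sup>2)"
    by (simp add: algebra_simps power2_eq_square)
  have "cnj (slope_point v m - v) * (z - v) = 2 * (1 - z * cnj v) / (1 + \<i> * m)"
    unfolding slope_point_minus vv[symmetric] by simp
  also have "\<dots> = (1 - \<i> * m) * (2 * (1 - z * cnj v)) / ((1 - \<i> * m) * (1 + \<i> * m))"
    by (rule nonzero_mult_divide_mult_cancel_left[symmetric]) (rule one_minus_i_mult_nonzero)
  also have "\<dots> = 2 * ((1 - \<i> * m) * (1 - z * cnj v)) / of_real (1 + m\<^sup>2)"
    unfolding m2 by (simp add: ac_simps)
  finally show ?thesis unfolding cross3_def by (simp add: Im_divide_of_real)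
qed

lemma norm_slope_point: "norm v = 1 \<Longrightarrow> norm (slope_point v m) = 1"
proof -
  assume "norm v = 1"
  moreover have "norm (1 + \<i> * complex_of_real m) = norm (1 - \<i> * complex_of_real m)"
    by (simp add: cmod_def)
  ultimately show ?thesis
    using one_minus_i_mult_nonzero[of m] by (simp add: slope_point_def norm_mult norm_divide)
qed

lemma slope_point_neq: "norm v = 1 \<Longrightarrow> slope_point v m \<noteq> v"
  using slope_point_minus[of v m] one_minus_i_mult_nonzero[of m] by auto

lemma slope_point_surj:
  assumes v: "norm v = 1" and w: "norm w = 1" and ne: "w \<noteq> v"
  obtains m where "w = slope_point v m"
proof -
  define \<zeta> where "\<zeta> = - w * cnj v"
  have vv: "v * cnj v = 1" using unit_mult_cnj[OF v] .
  have "norm \<zeta> = 1" using v w by (simp add: \<zeta>_def norm_mult)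
  then have c2: "(Re \<zeta>)\<^sup>2 + (Im \<zeta>)\<^sup>2 = 1" by (simp add: cmod_def)
  have w\<zeta>: "w = - v * \<zeta>" using vv by (simp add: \<zeta>_def algebra_simps)
  then have "\<zeta> \<noteq> -1" using ne by auto
  have c: "1 + Re \<zeta> \<noteq> 0"
  proof
    assume "1 + Re \<zeta> = 0"
    then have "Re \<zeta> = -1" by simp
    moreover from this have "Im \<zeta> * Im \<zeta> = 0" using c2 by (simp add: power2_eq_square)
    ultimately show False using \<open>\<zeta> \<noteq> -1\<close> by (simp add: complex_eq_iff)
  qed
  define m where "m = Im \<zeta> / (1 + Re \<zeta>)"
  have "Re (\<zeta> * (1 - \<i> * m)) = 1" "Im (\<zeta> * (1 - \<i> * m)) = m"
    unfolding m_def using c c2 by (simp_all add: field_simps power2_eq_square)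
  then have "1 + \<i> * complex_of_real m = \<zeta> * (1 - \<i> * m)" by (simp add: complex_eq_iff)
  then have key: "(1 + \<i> * complex_of_real m) / (1 - \<i> * m) = \<zeta>"
    using one_minus_i_mult_nonzero[of m] by (simp add: field_simps)
  have "w = slope_point v m" by (simp only: slope_point_def key w\<zeta>)
  then show ?thesis by (rule that)
qed

lemma convex_Im_affine_nonneg: "convex {z. 0 \<le> Im (k * (1 - z * c))}"
  and convex_Im_affine_pos: "convex {z. 0 < Im (k * (1 - z * c))}"
proof -
  have "Im (k * (1 - z * c)) = Im k - inner (\<i> * cnj (k * c)) z" for z
    by (simp add: inner_complex_def algebra_simps)
  then show "convex {z. 0 \<le> Im (k * (1 - z * c))}" "convex {z. 0 < Im (k * (1 - z * c))}"
    using convex_halfspace_le convex_halfspace_lt by simp_all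
qed

lemma Im_affine_nonneg_on_convex_hull_iff:
  "(\<forall>z\<in>convex hull S. 0 \<le> Im (k * (1 - z * c))) \<longleftrightarrow> (\<forall>z\<in>S. 0 \<le> Im (k * (1 - z * c)))"
  using hull_subset[of S convex] hull_minimal[of S "{z. 0 \<le> Im (k * (1 - z * c))}" convex]
    convex_Im_affine_nonneg[of k c] by auto

lemma Im_affine_zero_on_convex_hull_iff:
  assumes "\<forall>z\<in>S. 0 \<le> Im (k * (1 - z * c))"
  shows "(\<exists>z\<in>convex hull S. Im (k * (1 - z * c)) = 0) \<longleftrightarrow> (\<exists>z\<in>S. Im (k * (1 - z * c)) = 0)"
proof -
  have "(\<forall>z\<in>S. 0 < Im (k * (1 - z * c))) \<Longrightarrow> convex hull S \<subseteq> {z. 0 < Im (k * (1 - z * c))}"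
    by (intro hull_minimal convex_Im_affine_pos) auto
  then show ?thesis using assms hull_subset[of S convex] by force
qed

lemma Im_slope_affine_eq:
  fixes \<mu> :: real
  assumes "norm z < 1" "norm v = 1"
  shows "Im ((1 - \<i> * \<mu>) * (1 - z * cnj v)) = (chord_slope z v - \<mu>) * Re (1 - z * cnj v)"
  using Im_eq_chord_slope_mult[of z v] assms by (simp add: algebra_simps)

lemma Im_slope_affine_nonneg_iff:
  fixes \<mu> :: real
  assumes "norm z < 1" "norm v = 1"
  shows "0 \<le> Im ((1 - \<i> * \<mu>) * (1 - z * cnj v)) \<longleftrightarrow> \<mu> \<le> chord_slope z v"
    and "Im ((1 - \<i> * \<mu>) * (1 - z * cnj v)) = 0 \<longleftrightarrow> \<mu> = chord_slope z v"
  using Im_slope_affine_eq[OF assms, of \<mu>] Re_one_minus_mult_cnj_pos[of z v] assms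
  by (auto simp: zero_le_mult_iff)

text \<open>The defining conditions of psi for the hull of S at the candidate point
  slope_point v \<mu> only involve the sign of an affine function, so they hold
  iff \<mu> is the least chord slope of a point of S.\<close>

lemma psi_condition_slope_point_iff:
  fixes S :: "complex set"
  assumes S: "finite S" "S \<noteq> {}" "S \<subseteq> ball 0 1" and v: "norm v = 1"
  defines "m \<equiv> MIN z\<in>S. chord_slope z v"
  shows "((\<exists>z\<in>convex hull S. cross3 v (slope_point v \<mu>) z = 0)
          \<and> (\<forall>z\<in>convex hull S. cross3 v (slope_point v \<mu>) z \<ge> 0)) \<longleftrightarrow> \<mu> = m"
proof -
  define h where "h z = Im ((1 - \<i> * \<mu>) * (1 - z * cnj v))" for z
  have "cross3 v (slope_point v \<mu>) z = 2 * h z / (1 + \<mu>\<^sup>2)" for z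
    using cross3_slope_point[OF v] by (simp add: h_def)
  moreover have "0 < 1 + \<mu>\<^sup>2" by (simp add: add_pos_nonneg)
  ultimately have cross: "cross3 v (slope_point v \<mu>) z \<ge> 0 \<longleftrightarrow> h z \<ge> 0"
    "cross3 v (slope_point v \<mu>) z = 0 \<longleftrightarrow> h z = 0" for z
    by (simp_all add: zero_le_divide_iff)
  have on_S: "0 \<le> h z \<longleftrightarrow> \<mu> \<le> chord_slope z v" "h z = 0 \<longleftrightarrow> \<mu> = chord_slope z v" if "z \<in> S" for z
    using Im_slope_affine_nonneg_iff[of z v \<mu>] that S v by (auto simp: h_def)
  have hull_nonneg: "(\<forall>z\<in>convex hull S. 0 \<le> h z) \<longleftrightarrow> (\<forall>z\<in>S. 0 \<le> h z)"
    unfolding h_def by (rule Im_affine_nonneg_on_convex_hull_iff)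
  have hull_zero: "(\<exists>z\<in>convex hull S. h z = 0) \<longleftrightarrow> (\<exists>z\<in>S. h z = 0)" if "\<forall>z\<in>S. 0 \<le> h z"
    using that unfolding h_def by (rule Im_affine_zero_on_convex_hull_iff)
  have "(\<forall>z\<in>S. 0 \<le> h z) \<longleftrightarrow> \<mu> \<le> m"
    using on_S S by (simp add: m_def Min_ge_iff)
  moreover have "(\<exists>z\<in>S. h z = 0) \<longleftrightarrow> \<mu> = m" if "\<mu> \<le> m"
  proof -
    have "m \<in> (\<lambda>z. chord_slope z v) ` S" "\<forall>z\<in>S. m \<le> chord_slope z v"
      unfolding m_def using S by (auto intro: Min_in)
    then show ?thesis using on_S that by force
  qed
  ultimately show ?thesis unfolding cross using hull_nonneg hull_zero by blast
qed

lemma psi_convex_hull: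
  fixes S :: "complex set"
  assumes S: "finite S" "S \<noteq> {}" "S \<subseteq> ball 0 1" and v: "norm v = 1"
  shows "psi (convex hull S) v = slope_point v (MIN z\<in>S. chord_slope z v)"
  unfolding psi_def
proof (rule the_equality)
  show "slope_point v (MIN z\<in>S. chord_slope z v) \<in> sphere 0 1 \<and> slope_point v (MIN z\<in>S. chord_slope z v) \<noteq> v
        \<and> (\<exists>z\<in>convex hull S. cross3 v (slope_point v (MIN z\<in>S. chord_slope z v)) z = 0)
        \<and> (\<forall>z\<in>convex hull S. cross3 v (slope_point v (MIN z\<in>S. chord_slope z v)) z \<ge> 0)"
    using psi_condition_slope_point_iff[OF S v] norm_slope_point[OF v] slope_point_neq[OF v] by simp
next
  fix w
  assume w: "w \<in> sphere 0 1 \<and> w \<noteq> v \<and> (\<exists>z\<in>convex hull S. cross3 v w z = 0)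
             \<and> (\<forall>z\<in>convex hull S. cross3 v w z \<ge> 0)"
  then obtain \<mu> where "w = slope_point v \<mu>" using slope_point_surj[OF v] by auto
  then show "w = slope_point v (MIN z\<in>S. chord_slope z v)"
    using w psi_condition_slope_point_iff[OF S v] by auto
qed

lemma chord_slope_Min_le_hull:
  assumes S: "finite S" "S \<noteq> {}" "S \<subseteq> ball 0 1" and v: "norm v = 1" and z: "z \<in> convex hull S"
  shows "(MIN w\<in>S. chord_slope w v) \<le> chord_slope z v"
proof -
  define m where "m = (MIN w\<in>S. chord_slope w v)"
  have "0 \<le> Im ((1 - \<i> * m) * (1 - w * cnj v))" if "w \<in> S" for w
  proof -
    have "m \<le> chord_slope w v" unfolding m_def using S that by (intro Min_le) auto
    moreover have "norm w < 1" using S that by auto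
    ultimately show ?thesis using Im_slope_affine_nonneg_iff(1)[of w v m] v by blast
  qed
  then have "0 \<le> Im ((1 - \<i> * m) * (1 - z * cnj v))"
    using Im_affine_nonneg_on_convex_hull_iff z by blast
  moreover have "norm z < 1"
    using z hull_minimal[of S "ball 0 1" convex] S convex_ball by auto
  ultimately have "m \<le> chord_slope z v" using Im_slope_affine_nonneg_iff(1)[of z v m] v by blast
  then show ?thesis by (simp add: m_def)
qed

lemma circle_lift_eqI:
  assumes cont: "continuous_on UNIV F" and lift: "\<And>x. circ_pt (F x) = g (circ_pt x)"
    and F0: "0 \<le> F 0" "F 0 < 1"
  shows "circle_lift g = F"
  unfolding circle_lift_def
proof (rule the_equality)
  show "continuous_on UNIV F \<and> (\<forall>x. circ_pt (F x) = g (circ_pt x)) \<and> 0 \<le> F 0 \<and> F 0 < 1"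
    using assms by auto
next
  fix G assume G: "continuous_on UNIV G \<and> (\<forall>x. circ_pt (G x) = g (circ_pt x)) \<and> 0 \<le> G 0 \<and> G 0 < 1"
  define h where "h x = G x - F x" for x
  have h_cont: "continuous_on UNIV h"
    unfolding h_def[abs_def] using G cont by (intro continuous_intros) auto
  have h_Ints: "h x \<in> \<int>" for x
    unfolding h_def by (rule circ_pt_eq_imp_diff_Ints) (use G lift in auto)
  have "h constant_on UNIV"
  proof (rule continuous_discrete_range_constant[OF connected_UNIV h_cont])
    fix x :: real
    show "\<exists>e>0. \<forall>y. y \<in> UNIV \<and> h y \<noteq> h x \<longrightarrow> e \<le> norm (h y - h x)"
    proof (intro exI[of _ 1] conjI allI impI)
      fix y assume "y \<in> UNIV \<and> h y \<noteq> h x"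
      moreover obtain i j where "h y = of_int i" "h x = of_int j" using h_Ints by (metis Ints_cases)
      ultimately show "1 \<le> norm (h y - h x)" by auto
    qed simp
  qed
  moreover have "h 0 = 0"
  proof -
    obtain j where j: "h 0 = of_int j" using h_Ints by (metis Ints_cases)
    moreover have "-1 < h 0" "h 0 < 1" using G F0 by (auto simp: h_def)
    ultimately show ?thesis by auto
  qed
  ultimately have "h x = 0" for x by (metis UNIV_I constant_on_def)
  then show "G = F" by (simp add: h_def fun_eq_iff)
qed

definition tri_lift :: "complex \<Rightarrow> complex \<Rightarrow> complex \<Rightarrow> real \<Rightarrow> real" where
  "tri_lift a b c x = min (chord_lift a x) (min (chord_lift b x) (chord_lift c x))"

lemma tri_lift_eq:
  "tri_lift a b c x = x + 1/2 + arctan (MIN z\<in>{a,b,c}. chord_slope z (circ_pt x)) / pi"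
proof -
  have "arctan (min p q) / pi = min (arctan p / pi) (arctan q / pi)" for p q
    using pi_gt_zero by (simp add: min_def arctan_le_iff divide_le_cancel)
  then show ?thesis by (simp add: tri_lift_def chord_lift_def min_add_distrib_left)
qed

lemma tri_lift_bounds: "x < tri_lift a b c x" "tri_lift a b c x < x + 1"
  unfolding tri_lift_def using chord_lift_bounds[where x=x] by (auto simp: min_def)

lemma tri_lift_add_int: "k \<in> \<int> \<Longrightarrow> tri_lift a b c (x + k) = tri_lift a b c x + k"
  by (simp add: tri_lift_def chord_lift_add_int min_add_distrib_right)

lemma tri_lift_le: "tri_lift a b c x \<le> chord_lift a x" "tri_lift a b c x \<le> chord_lift b x"
  "tri_lift a b c x \<le> chord_lift c x"
  by (auto simp: tri_lift_def)

lemma tri_lift_eq_chord_lift: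
  fixes x :: real
  defines "s z \<equiv> chord_slope z (circ_pt x)"
  shows "s a \<le> s b \<Longrightarrow> s a \<le> s c \<Longrightarrow> tri_lift a b c x = chord_lift a x"
    and "s b \<le> s a \<Longrightarrow> s b \<le> s c \<Longrightarrow> tri_lift a b c x = chord_lift b x"
    and "s c \<le> s a \<Longrightarrow> s c \<le> s b \<Longrightarrow> tri_lift a b c x = chord_lift c x"
proof -
  have le: "s y \<le> s z \<Longrightarrow> chord_lift y x \<le> chord_lift z x" for y z
    unfolding s_def by (simp add: chord_lift_le_iff)
  show "s a \<le> s b \<Longrightarrow> s a \<le> s c \<Longrightarrow> tri_lift a b c x = chord_lift a x"
    using le[of a b] le[of a c] by (simp add: tri_lift_def min_def)
  show "s b \<le> s a \<Longrightarrow> s b \<le> s c \<Longrightarrow> tri_lift a b c x = chord_lift b x"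
    using le[of b a] le[of b c] by (simp add: tri_lift_def min_def)
  show "s c \<le> s a \<Longrightarrow> s c \<le> s b \<Longrightarrow> tri_lift a b c x = chord_lift c x"
    using le[of c a] le[of c b] by (simp add: tri_lift_def min_def)
qed

context
  fixes a b c :: complex
  assumes abc: "norm a < 1" "norm b < 1" "norm c < 1"
begin

lemma continuous_on_tri_lift: "continuous_on UNIV (tri_lift a b c)"
  unfolding tri_lift_def[abs_def] using abc by (intro continuous_on_min continuous_on_chord_lift)

lemma strict_mono_tri_lift: "strict_mono (tri_lift a b c)"
proof (rule strict_monoI)
  fix x y :: real assume "x < y"
  then have "chord_lift a x < chord_lift a y" "chord_lift b x < chord_lift b y" "chord_lift c x < chord_lift c y"
    using strict_mono_chord_lift abc by (auto dest: strict_monoD)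
  then show "tri_lift a b c x < tri_lift a b c y" unfolding tri_lift_def by linarith
qed

lemma circle_lift_psi_triangle: "circle_lift (psi (convex hull {a,b,c})) = tri_lift a b c"
proof (rule circle_lift_eqI[OF continuous_on_tri_lift])
  show "circ_pt (tri_lift a b c x) = psi (convex hull {a,b,c}) (circ_pt x)" for x
    unfolding tri_lift_eq circ_pt_add_arctan using abc by (simp add: psi_convex_hull)
  show "0 \<le> tri_lift a b c 0" "tri_lift a b c 0 < 1"
    using tri_lift_bounds[where x=0 and a=a and b=b and c=c] by auto
qed

end

section \<open>Rotation numbers of monotone degree-one lifts\<close>

locale monotone_degree_one =
  fixes f :: "real \<Rightarrow> real"
  assumes mono_f: "mono f" and f_add_1: "\<And>x. f (x + 1) = f x + 1"
begin

lemma funpow_add_1: "(f ^^ n) (x + 1) = (f ^^ n) x + 1"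
  by (induction n) (auto simp: f_add_1)

lemma funpow_add_nat: "(f ^^ n) (x + real k) = (f ^^ n) x + real k"
proof (induction k arbitrary: x)
  case (Suc k)
  have "(f ^^ n) (x + real (Suc k)) = (f ^^ n) ((x + real k) + 1)" by (simp add: add_ac)
  then show ?case using funpow_add_1 Suc by simp
qed simp

lemma funpow_add_int: "(f ^^ n) (x + real_of_int k) = (f ^^ n) x + real_of_int k"
proof (cases "k \<ge> 0")
  case True
  then show ?thesis using funpow_add_nat[of n x "nat k"] by simp
next
  case False
  define j where "j = nat (- k)"
  have kj: "real_of_int k = - real j" using False by (simp add: j_def)
  have "(f ^^ n) (x + real_of_int k) + real j = (f ^^ n) x"
    using funpow_add_nat[of n "x + real_of_int k" j] kj by simp
  then show ?thesis using kj by simp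
qed

lemma funpow_displacement_close: "\<bar>((f ^^ n) y - y) - ((f ^^ n) x - x)\<bar> \<le> 1"
proof -
  define k where "k = \<lfloor>y - x\<rfloor>"
  define y' where "y' = y - real_of_int k"
  have "x \<le> y'" "y' \<le> x + 1"
    unfolding y'_def k_def using of_int_floor_le[of "y - x"] real_of_int_floor_add_one_gt[of "y - x"]
    by linarith+
  then have "(f ^^ n) x \<le> (f ^^ n) y'" "(f ^^ n) y' \<le> (f ^^ n) x + 1"
    using funpow_mono[OF mono_f, of x y' n] funpow_mono[OF mono_f, of y' "x + 1" n] funpow_add_1
    by simp_all
  moreover have "(f ^^ n) y = (f ^^ n) y' + real_of_int k"
    using funpow_add_int[of n y' k] by (simp add: y'_def)
  ultimately show ?thesis using \<open>x \<le> y'\<close> \<open>y' \<le> x + 1\<close> by (simp add: y'_def abs_le_iff)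
qed

lemma orbit_subadditive: "\<bar>(f ^^ (m + n)) 0 - (f ^^ m) 0 - (f ^^ n) 0\<bar> \<le> 1"
  using funpow_displacement_close[of m "(f ^^ n) 0" 0] by (simp add: funpow_add)

lemma orbit_mult: "\<bar>(f ^^ (k * m)) 0 - real k * (f ^^ m) 0\<bar> \<le> real k"
proof (induction k)
  case (Suc k)
  have "\<bar>(f ^^ (m + k * m)) 0 - (f ^^ m) 0 - (f ^^ (k * m)) 0\<bar> \<le> 1" by (rule orbit_subadditive)
  then show ?case using Suc by (simp add: algebra_simps abs_le_iff)
qed simp

lemma orbit_ratio_close:
  assumes "n > 0" "m > 0"
  shows "\<bar>(f ^^ n) 0 / n - (f ^^ m) 0 / m\<bar> \<le> 1 / n + 1 / m"
proof -
  have nm: "real n > 0" "real m > 0" using assms by auto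
  have "\<bar>(f ^^ (k * j)) 0 / (real k * real j) - (f ^^ j) 0 / j\<bar> \<le> 1 / j" if "k > 0" "j > 0" for k j
  proof -
    have "\<bar>(f ^^ (k * j)) 0 / (real k * real j) - (f ^^ j) 0 / j\<bar>
        = \<bar>(f ^^ (k * j)) 0 - real k * (f ^^ j) 0\<bar> / (real k * real j)"
      using that by (simp add: field_simps abs_divide)
    also have "\<dots> \<le> real k / (real k * real j)"
      using orbit_mult[of k j] by (intro divide_right_mono) auto
    finally show ?thesis using that by simp
  qed
  from this[of n m] this[of m n] show ?thesis
    using assms by (simp add: mult.commute abs_le_iff)
qed

lemma convergent_orbit_ratio: "convergent (\<lambda>n. (f ^^ n) 0 / real n)"
proof -
  have "Cauchy (\<lambda>n. (f ^^ n) 0 / real n)"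
  proof (rule metric_CauchyI)
    fix e :: real assume e: "e > 0"
    obtain M :: nat where M: "real M > 2 / e" using reals_Archimedean2 by blast
    then have M0: "M > 0" using e by (metis divide_pos_pos gr0I of_nat_0 order_less_asym zero_less_numeral)
    have "dist ((f ^^ m) 0 / real m) ((f ^^ n) 0 / real n) < e" if "M \<le> m" "M \<le> n" for m n
    proof -
      have "1 / real m \<le> 1 / real M" "1 / real n \<le> 1 / real M" "2 / real M < e"
        using that M0 M e by (auto intro!: divide_left_mono simp: field_simps)
      then show ?thesis
        using orbit_ratio_close[of m n] that M0 by (simp add: dist_real_def)
    qed
    then show "\<exists>M. \<forall>m\<ge>M. \<forall>n\<ge>M. dist ((f ^^ m) 0 / real m) ((f ^^ n) 0 / real n) < e" by blast
  qed
  then show ?thesis by (simp add: Cauchy_convergent_iff)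
qed

lemma rotation_limit_exists: "\<exists>\<rho>. \<forall>x. (\<lambda>n. ((f ^^ n) x - x) / real n) \<longlonglongrightarrow> \<rho>"
proof -
  obtain \<rho> where \<rho>: "(\<lambda>n. (f ^^ n) 0 / real n) \<longlonglongrightarrow> \<rho>"
    using convergent_orbit_ratio by (auto simp: convergent_def)
  have "(\<lambda>n. ((f ^^ n) x - x) / real n) \<longlonglongrightarrow> \<rho>" for x
  proof -
    have "\<bar>((f ^^ n) x - x) / real n - (f ^^ n) 0 / real n\<bar> \<le> 1 / real n" for n
      using funpow_displacement_close[of n x 0]
      by (cases "n = 0") (simp_all add: diff_divide_distrib[symmetric] abs_divide divide_right_mono)
    then have "(\<lambda>n. ((f ^^ n) x - x) / real n - (f ^^ n) 0 / real n) \<longlonglongrightarrow> 0"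
      by (intro Lim_null_comparison[OF _ lim_const_over_n[of 1]]) auto
    from tendsto_add[OF this \<rho>] show ?thesis by simp
  qed
  then show ?thesis by blast
qed

lemma rotation_limit_le:
  assumes \<rho>: "(\<lambda>n. (f ^^ n) 0 / real n) \<longlonglongrightarrow> \<rho>"
    and q: "q > 0" and bound: "\<And>x. (f ^^ q) x \<le> x + p"
  shows "\<rho> \<le> p / q"
proof -
  have orbit: "(f ^^ (q * k)) 0 \<le> real k * p" for k
  proof (induction k)
    case (Suc k)
    have "(f ^^ (q * Suc k)) 0 = (f ^^ q) ((f ^^ (q * k)) 0)" by (simp add: funpow_add mult.commute)
    also have "\<dots> \<le> (f ^^ (q * k)) 0 + p" by (rule bound)
    finally show ?case using Suc by (simp add: algebra_simps)
  qed simp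
  have "strict_mono (\<lambda>k. q * (k + 1))" using q by (auto simp: strict_mono_def)
  from LIMSEQ_subseq_LIMSEQ[OF \<rho> this]
  have "(\<lambda>k. (f ^^ (q * (k + 1))) 0 / real (q * (k + 1))) \<longlonglongrightarrow> \<rho>" by (simp add: o_def)
  moreover have "(f ^^ (q * (k + 1))) 0 / real (q * (k + 1)) \<le> p / q" for k
  proof -
    have "(f ^^ (q * (k + 1))) 0 / real (q * (k + 1)) \<le> real (k + 1) * p / real (q * (k + 1))"
      using orbit[of "k + 1"] q by (intro divide_right_mono) auto
    also have "\<dots> = real (k + 1) * p / (real (k + 1) * real q)" by (simp only: of_nat_mult mult.commute)
    also have "\<dots> = p / q" by (rule nonzero_mult_divide_mult_cancel_left) simp
    finally show ?thesis .
  qed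
  ultimately show ?thesis by (intro LIMSEQ_le_const2) auto
qed

end

lemma strict_mono_funpow: "strict_mono (f :: real \<Rightarrow> real) \<Longrightarrow> strict_mono (f ^^ n)"
  by (induction n) (auto simp: strict_mono_def)

lemma (in monotone_degree_one) funpow_orbit_le_iff:
  assumes "strict_mono f"
  shows "(f ^^ q) ((f ^^ j) x) \<le> (f ^^ j) x + real_of_int k \<longleftrightarrow> (f ^^ q) x \<le> x + real_of_int k"
    and "(f ^^ q) ((f ^^ j) x) < (f ^^ j) x + real_of_int k \<longleftrightarrow> (f ^^ q) x < x + real_of_int k"
proof -
  have "(f ^^ q) ((f ^^ j) x) = (f ^^ j) ((f ^^ q) x)" by (metis funpow_add add.commute comp_apply)
  moreover have "(f ^^ j) x + real_of_int k = (f ^^ j) (x + real_of_int k)" by (simp add: funpow_add_int)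
  ultimately show "(f ^^ q) ((f ^^ j) x) \<le> (f ^^ j) x + real_of_int k \<longleftrightarrow> (f ^^ q) x \<le> x + real_of_int k"
    "(f ^^ q) ((f ^^ j) x) < (f ^^ j) x + real_of_int k \<longleftrightarrow> (f ^^ q) x < x + real_of_int k"
    using strict_mono_funpow[OF assms] by (simp_all add: strict_mono_less_eq strict_mono_less)
qed

lemma rot_num_eqI:
  assumes "\<forall>x. (\<lambda>n. ((circle_lift g ^^ n) x - x) / real n) \<longlonglongrightarrow> \<rho>"
  shows "rot_num g = \<rho>"
  unfolding rot_num_def using assms LIMSEQ_unique by (intro the_equality) blast+

lemma continuous_on_funpow:
  fixes f :: "real \<Rightarrow> real"
  assumes "continuous_on UNIV f" shows "continuous_on UNIV (f ^^ n)"
proof (induction n)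
  case (Suc n)
  have "continuous_on UNIV (f \<circ> (f ^^ n))"
    by (rule continuous_on_compose[OF Suc]) (use assms in \<open>auto intro: continuous_on_subset\<close>)
  then show ?case by simp
qed (simp add: continuous_on_id)

text \<open>Strict inequality for all x upgrades to a uniform gap, since (f ^^ q) x - x is
  continuous and 1-periodic.\<close>

lemma (in monotone_degree_one) funpow_uniform_gap:
  assumes cont: "continuous_on UNIV f" and less: "\<And>x. (f ^^ q) x < x + p"
  obtains M where "M < p" "\<And>x. (f ^^ q) x \<le> x + M"
proof -
  define h where "h x = (f ^^ q) x - x" for x
  have h_cont: "continuous_on {0..1} h"
    unfolding h_def[abs_def] using continuous_on_funpow[OF cont, of q]
    by (intro continuous_intros) (auto intro: continuous_on_subset)
  obtain x0 where x0: "x0 \<in> {0..1}" "\<forall>y\<in>{0..1}. h y \<le> h x0"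
    using continuous_attains_sup[OF compact_Icc _ h_cont] by auto
  have "h x \<le> h x0" for x
  proof -
    define x' where "x' = x - real_of_int \<lfloor>x\<rfloor>"
    have "0 \<le> x'" "x' \<le> 1" unfolding x'_def
      using of_int_floor_le[of x] real_of_int_floor_add_one_gt[of x] by linarith+
    moreover have "h x = h x'"
      unfolding h_def x'_def using funpow_add_int[of q "x - real_of_int \<lfloor>x\<rfloor>" "\<lfloor>x\<rfloor>"] by simp
    ultimately show ?thesis using x0 by auto
  qed
  moreover have "h x0 < p" using less[of x0] by (simp add: h_def)
  ultimately show ?thesis using that[of "h x0"] by (simp add: h_def algebra_simps)
qed

lemma rot_num_less:
  assumes f: "monotone_degree_one f" and cont: "continuous_on UNIV f"
    and lift: "circle_lift g = f"
    and q: "q > 0" and less: "\<And>x. (f ^^ q) x < x + p"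
  shows "rot_num g < p / q"
proof -
  interpret monotone_degree_one f by (rule f)
  obtain \<rho> where \<rho>: "\<forall>x. (\<lambda>n. ((f ^^ n) x - x) / real n) \<longlonglongrightarrow> \<rho>"
    using rotation_limit_exists by blast
  obtain M where M: "M < p" "\<And>x. (f ^^ q) x \<le> x + M"
    using funpow_uniform_gap[OF cont less] by blast
  have "\<rho> \<le> M / q" using \<rho>[rule_format, of 0] by (intro rotation_limit_le[OF _ q M(2)]) simp
  also have "\<dots> < p / q" using M(1) q by (simp add: divide_strict_right_mono)
  finally show ?thesis using rot_num_eqI[of g \<rho>] \<rho> lift by simp
qed

lemma monotone_degree_one_tri_lift:
  assumes "norm a < 1" "norm b < 1" "norm c < 1"
  shows "monotone_degree_one (tri_lift a b c)"
  using strict_mono_tri_lift[OF assms] tri_lift_add_int[of 1 a b c]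
  by unfold_locales (auto intro: strict_mono_mono)

section \<open>Polynomial sign certificates\<close>

text \<open>On each of four ranges of the parameter u, the sign of Im (w1 * cnj w2) for the two orbit
  points w1, w2 compared below is that of one of these polynomials.  Each is certified positive
  by an expansion with nonnegative coefficients in quantities x, y, s, w that are nonnegative
  on the range, e.g. x = -2u - 1, y = 2u + 2, s = 5 - 5t, w = 5t - 4 for the first.\<close>

definition gap_poly_1 :: "real \<Rightarrow> real \<Rightarrow> real" where
  "gap_poly_1 u t = (- 32 * t + 32 * t^2 + 32 * u - 64 * u * t - 64 * u * t^2 - 32 * u * t^3 + 32 * u^2 + 32 * u^2 * t + 32 * u^2 * t^2 - 96 * u^2 * t^4 + 32 * u^3 * t^3 + 32 * u^3 * t^4 + 64 * u^3 * t^5)"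

definition bernstein_1 :: "real \<Rightarrow> real \<Rightarrow> real \<Rightarrow> real \<Rightarrow> real" where
  "bernstein_1 x y s w = 150000 * y^3 * w^5 + (727500 * y^3 * s * w^4 + 1392500 * y^3 * s^2 * w^3 + 1317000 * y^3 * s^3 * w^2 + 616160 * y^3 * s^4 * w + 114168 * y^3 * s^5 + 500000 * x * y^2 * w^5 + 2560000 * x * y^2 * s * w^4 + 5120000 * x * y^2 * s^2 * w^3 + 5025400 * x * y^2 * s^3 * w^2 + 2428880 * x * y^2 * s^4 * w + 463528 * x * y^2 * s^5 + 400000 * x^2 * y * w^5 + 2360000 * x^2 * y * s * w^4 + 5192000 * x^2 * y * s^2 * w^3 + 5463200 * x^2 * y * s^3 * w^2 + 2786800 * x^2 * y * s^4 * w + 555696 * x^2 * y * s^5 + 320000 * x^3 * s * w^4 + 1120000 * x^3 * s^2 * w^3 + 1468800 * x^3 * s^3 * w^2 + 855360 * x^3 * s^4 * w + 186624 * x^3 * s^5)"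

lemma bernstein_1_pos:
  assumes "0 \<le> x" "0 < y" "0 < s" "0 < w"
  shows "0 < bernstein_1 x y s w"
  unfolding bernstein_1_def using assms
  by (intro add_pos_nonneg mult_pos_pos add_nonneg_nonneg mult_nonneg_nonneg zero_less_power zero_le_power; simp)

lemma gap_poly_1_eq: "3125 * gap_poly_1 u t = bernstein_1 (-2*u - 1) (2*u + 2) (5 - 5*t) (5*t - 4)"
  unfolding gap_poly_1_def bernstein_1_def by algebra

lemma gap_poly_1_pos:
  assumes "-1 < u" "u \<le> -1/2" "4/5 < t" "t < 1"
  shows "0 < gap_poly_1 u t"
proof -
  have "0 < bernstein_1 (-2*u - 1) (2*u + 2) (5 - 5*t) (5*t - 4)" using assms by (intro bernstein_1_pos) auto
  then show ?thesis unfolding gap_poly_1_eq[symmetric] by simp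
qed

definition gap_poly_2 :: "real \<Rightarrow> real \<Rightarrow> real" where
  "gap_poly_2 u t = - (- 128 * t^3 - 64 * u * t - 64 * u * t^3 - 64 * u^2 * t^2 + 64 * u^2 * t^3 + 64 * u^2 * t^4 + 64 * u^2 * t^5 - 32 * u^3 + 32 * u^3 * t + 64 * u^3 * t^3 + 32 * u^3 * t^4 + 32 * u^3 * t^5)"

definition bernstein_2 :: "real \<Rightarrow> real \<Rightarrow> real \<Rightarrow> real \<Rightarrow> real" where
  "bernstein_2 x y s w = 150000 * y^3 * w^5 + (650000 * y^3 * s * w^4 + 1111000 * y^3 * s^2 * w^3 + 935000 * y^3 * s^3 * w^2 + 386640 * y^3 * s^4 * w + 62652 * y^3 * s^5 + 700000 * x * y^2 * w^5 + 3040000 * x * y^2 * s * w^4 + 5244000 * x * y^2 * s^2 * w^3 + 4490000 * x * y^2 * s^3 * w^2 + 1907520 * x * y^2 * s^4 * w + 321536 * x * y^2 * s^5 + 1000000 * x^2 * y * w^5 + 4360000 * x^2 * y * s * w^4 + 7572000 * x^2 * y * s^2 * w^3 + 6547200 * x^2 * y * s^3 * w^2 + 2818400 * x^2 * y * s^4 * w + 483200 * x^2 * y * s^5 + 400000 * x^3 * w^5 + 1760000 * x^3 * s * w^4 + 3088000 * x^3 * s^2 * w^3 + 2700800 * x^3 * s^3 * w^2 + 1177600 * x^3 * s^4 * w + 204800 * x^3 * s^5)"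

lemma bernstein_2_pos:
  assumes "0 \<le> x" "0 < y" "0 < s" "0 < w"
  shows "0 < bernstein_2 x y s w"
  unfolding bernstein_2_def using assms
  by (intro add_pos_nonneg mult_pos_pos add_nonneg_nonneg mult_nonneg_nonneg zero_less_power zero_le_power; simp)

lemma gap_poly_2_eq: "3125 * gap_poly_2 u t = bernstein_2 (2*u + 1) (-2*u) (5 - 5*t) (5*t - 4)"
  unfolding gap_poly_2_def bernstein_2_def by algebra

lemma gap_poly_2_pos:
  assumes "-1/2 \<le> u" "u < 0" "4/5 < t" "t < 1"
  shows "0 < gap_poly_2 u t"
proof -
  have "0 < bernstein_2 (2*u + 1) (-2*u) (5 - 5*t) (5*t - 4)" using assms by (intro bernstein_2_pos) auto
  then show ?thesis unfolding gap_poly_2_eq[symmetric] by simp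
qed

definition gap_poly_3 :: "real \<Rightarrow> real \<Rightarrow> real" where
  "gap_poly_3 u t = - (- 128 * t^3 + 64 * u * t + 64 * u * t^3 + 64 * u^2 * t^2 + 64 * u^2 * t^3 - 64 * u^2 * t^4 + 64 * u^2 * t^5 - 32 * u^3 - 32 * u^3 * t - 64 * u^3 * t^3 + 32 * u^3 * t^4 - 32 * u^3 * t^5)"

definition bernstein_3 :: "real \<Rightarrow> real \<Rightarrow> real \<Rightarrow> real \<Rightarrow> real" where
  "bernstein_3 x y s w = 150000 * x^3 * w^5 + (400000 * y^3 * w^5 + 1760000 * y^3 * s * w^4 + 3088000 * y^3 * s^2 * w^3 + 2700800 * y^3 * s^3 * w^2 + 1177600 * y^3 * s^4 * w + 204800 * y^3 * s^5 + 1000000 * x * y^2 * w^5 + 4360000 * x * y^2 * s * w^4 + 7572000 * x * y^2 * s^2 * w^3 + 6547200 * x * y^2 * s^3 * w^2 + 2818400 * x * y^2 * s^4 * w + 483200 * x * y^2 * s^5 + 700000 * x^2 * y * w^5 + 3000000 * x^2 * y * s * w^4 + 5104000 * x^2 * y * s^2 * w^3 + 4306800 * x^2 * y * s^3 * w^2 + 1801280 * x^2 * y * s^4 * w + 298496 * x^2 * y * s^5 + 630000 * x^3 * s * w^4 + 1045000 * x^3 * s^2 * w^3 + 854600 * x^3 * s^3 * w^2 + 343960 * x^3 * s^4 * w + 54372 * x^3 * s^5)"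

lemma bernstein_3_pos:
  assumes "0 < x" "0 \<le> y" "0 < s" "0 < w"
  shows "0 < bernstein_3 x y s w"
  unfolding bernstein_3_def using assms
  by (intro add_pos_nonneg mult_pos_pos add_nonneg_nonneg mult_nonneg_nonneg zero_less_power zero_le_power; simp)

lemma gap_poly_3_eq: "3125 * gap_poly_3 u t = bernstein_3 (2*u) (1 - 2*u) (5 - 5*t) (5*t - 4)"
  unfolding gap_poly_3_def bernstein_3_def by algebra

lemma gap_poly_3_pos:
  assumes "0 < u" "u \<le> 1/2" "4/5 < t" "t < 1"
  shows "0 < gap_poly_3 u t"
proof -
  have "0 < bernstein_3 (2*u) (1 - 2*u) (5 - 5*t) (5*t - 4)" using assms by (intro bernstein_3_pos) auto
  then show ?thesis unfolding gap_poly_3_eq[symmetric] by simp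
qed

definition gap_poly_4 :: "real \<Rightarrow> real \<Rightarrow> real" where
  "gap_poly_4 u t = (- 32 * t + 32 * t^3 - 32 * u + 96 * u * t + 160 * u * t^3 + 32 * u * t^4 + 32 * u^2 + 128 * u^2 * t^2 - 160 * u^2 * t^3 + 96 * u^2 * t^4 - 96 * u^2 * t^5 - 64 * u^3 * t^2 - 32 * u^3 * t^3 - 128 * u^3 * t^4 + 32 * u^3 * t^5 - 64 * u^3 * t^6)"

definition bernstein_4 :: "real \<Rightarrow> real \<Rightarrow> real \<Rightarrow> real \<Rightarrow> real" where
  "bernstein_4 x y s w = 1500000 * y^3 * w^6 + (8325000 * y^3 * s * w^5 + 19157500 * y^3 * s^2 * w^4 + 23404500 * y^3 * s^3 * w^3 + 16013600 * y^3 * s^4 * w^2 + 5819040 * y^3 * s^5 * w + 877432 * y^3 * s^6 + 5000000 * x * y^2 * w^6 + 28500000 * x * y^2 * s * w^5 + 67210000 * x * y^2 * s^2 * w^4 + 84012000 * x * y^2 * s^3 * w^3 + 58748200 * x * y^2 * s^4 * w^2 + 21802320 * x * y^2 * s^5 * w + 3356072 * x * y^2 * s^6 + 4000000 * x^2 * y * w^6 + 24400000 * x^2 * y * s * w^5 + 60840000 * x^2 * y * s^2 * w^4 + 79724000 * x^2 * y * s^3 * w^3 + 58080000 * x^2 * y * s^4 * w^2 + 22351600 * x^2 * y * s^5 * w + 3555504 * x^2 * y * s^6 + 1600000 * x^3 * s * w^5 + 7040000 * x^3 * s^2 * w^4 + 12400000 * x^3 * s^3 * w^3 + 10928000 * x^3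 * s^4 * w^2 + 4818240 * x^3 * s^5 * w + 850176 * x^3 * s^6)"

lemma bernstein_4_pos:
  assumes "0 \<le> x" "0 < y" "0 < s" "0 < w"
  shows "0 < bernstein_4 x y s w"
  unfolding bernstein_4_def using assms
  by (intro add_pos_nonneg mult_pos_pos add_nonneg_nonneg mult_nonneg_nonneg zero_less_power zero_le_power; simp)

lemma gap_poly_4_eq: "15625 * gap_poly_4 u t = bernstein_4 (2*u - 1) (2 - 2*u) (5 - 5*t) (5*t - 4)"
  unfolding gap_poly_4_def bernstein_4_def by algebra

lemma gap_poly_4_pos:
  assumes "1/2 \<le> u" "u < 1" "4/5 < t" "t < 1"
  shows "0 < gap_poly_4 u t"
proof -
  have "0 < bernstein_4 (2*u - 1) (2 - 2*u) (5 - 5*t) (5*t - 4)" using assms by (intro bernstein_4_pos) auto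
  then show ?thesis unfolding gap_poly_4_eq[symmetric] by simp
qed

section \<open>Homogeneous coordinates\<close>

definition hom_pt :: "complex \<times> complex \<Rightarrow> complex" where
  "hom_pt p = fst p / snd p"

definition hom_on_circle :: "complex \<times> complex \<Rightarrow> bool" where
  "hom_on_circle p \<longleftrightarrow> snd p \<noteq> 0 \<and> norm (hom_pt p) = 1"

definition hom_sin :: "complex \<times> complex \<Rightarrow> complex \<times> complex \<Rightarrow> real" where
  "hom_sin p1 p2 = Im (fst p1 * cnj (snd p1) * cnj (fst p2) * snd p2)"

lemma chord_map_hom:
  assumes z: "norm z < 1" and c: "c \<noteq> 0" and p: "hom_on_circle p"
  defines "p' \<equiv> (c * (z * snd p - fst p), c * (snd p - cnj z * fst p))"
  shows "hom_on_circle p'" "hom_pt p' = chord_map z (hom_pt p)"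
proof -
  obtain X Y where XY: "p = (X, Y)" by (cases p)
  have Y: "Y \<noteq> 0" and n: "norm (X / Y) = 1" using p XY by (auto simp: hom_on_circle_def hom_pt_def)
  have "Y - cnj z * X = Y * (1 - cnj z * (X / Y))" using Y by (simp add: field_simps)
  then have d: "Y - cnj z * X \<noteq> 0" using Y chord_map_denom_nonzero[OF z n] by simp
  have "hom_pt p' = (z * Y - X) / (Y - cnj z * X)"
    using c by (simp add: p'_def XY hom_pt_def)
  also have "\<dots> = chord_map z (X / Y)"
  proof -
    have "z - X / Y = (z * Y - X) / Y" "1 - cnj z * (X / Y) = (Y - cnj z * X) / Y"
      using Y by (simp_all add: field_simps)
    then show ?thesis using Y by (simp add: chord_map_def)
  qed
  finally show pt: "hom_pt p' = chord_map z (hom_pt p)" by (simp add: XY hom_pt_def)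
  show "hom_on_circle p'"
    using c d pt norm_chord_map[OF z n] by (simp add: hom_on_circle_def p'_def XY hom_pt_def)
qed

lemma Im_hom_pt_mult_cnj:
  assumes "hom_on_circle p1" "hom_on_circle p2"
  shows "Im (hom_pt p1 * cnj (hom_pt p2)) = hom_sin p1 p2 / ((norm (snd p1))\<^sup>2 * (norm (snd p2))\<^sup>2)"
proof -
  obtain X1 Y1 X2 Y2 where p: "p1 = (X1, Y1)" "p2 = (X2, Y2)" by (cases p1, cases p2) auto
  have "Y1 \<noteq> 0" "Y2 \<noteq> 0" using assms p by (auto simp: hom_on_circle_def)
  then have "hom_pt p1 * cnj (hom_pt p2) = (X1 * cnj Y1 * cnj X2 * Y2) / ((Y1 * cnj Y1) * (Y2 * cnj Y2))"
    by (simp add: p hom_pt_def field_simps)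
  moreover have "Y1 * cnj Y1 = of_real ((norm Y1)\<^sup>2)" "Y2 * cnj Y2 = of_real ((norm Y2)\<^sup>2)"
    by (metis complex_norm_square of_real_power)+
  ultimately have "hom_pt p1 * cnj (hom_pt p2)
      = (X1 * cnj Y1 * cnj X2 * Y2) / of_real ((norm Y1)\<^sup>2 * (norm Y2)\<^sup>2)"
    by simp
  then show ?thesis by (simp add: p hom_sin_def Im_divide_of_real)
qed

lemma sin_pos_if_hom_sin_pos:
  assumes "hom_on_circle p1 \<and> circ_pt w = hom_pt p1" and "hom_on_circle p2 \<and> circ_pt h = hom_pt p2"
    and pos: "hom_sin p1 p2 > 0"
  shows "sin (2*pi*(w - h)) > 0"
proof -
  from assms(1,2) have p: "hom_on_circle p1" "hom_on_circle p2"
    and w: "circ_pt w = hom_pt p1" and h: "circ_pt h = hom_pt p2" by auto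
  have "snd p1 \<noteq> 0" "snd p2 \<noteq> 0" using p by (auto simp: hom_on_circle_def)
  moreover have "sin (2*pi*(w - h)) = Im (circ_pt w * cnj (circ_pt h))"
    by (simp only: circ_pt_mult_cnj) (simp add: circ_pt_def)
  ultimately show ?thesis unfolding w h Im_hom_pt_mult_cnj[OF p] using pos by simp
qed

lemma sin_two_pi_nonpos:
  assumes "-1/2 \<le> d" "d \<le> 0" shows "sin (2*pi*d) \<le> 0"
proof -
  have "2*pi*(-1/2) \<le> 2*pi*d" using assms(1) pi_gt_zero by (intro mult_left_mono) auto
  moreover have "2*pi*d \<le> 0" using assms(2) pi_gt_zero by (simp add: mult_nonneg_nonpos)
  ultimately have "0 \<le> sin (- (2*pi*d))" by (intro sin_ge_zero) auto
  then show ?thesis by simp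
qed

lemma pos_if_sin_pos_right_of_zero:
  fixes d :: "real \<Rightarrow> real"
  assumes cont: "continuous_on {a..b} d" and zero: "d a = 0"
    and sin_pos: "\<And>v. a < v \<Longrightarrow> v \<le> b \<Longrightarrow> sin (2*pi*d v) > 0"
    and u: "a < u" "u \<le> b"
  shows "d u > 0"
proof (rule ccontr)
  assume "\<not> d u > 0"
  then have "d u < -1/2" using sin_pos[OF u] sin_two_pi_nonpos[of "d u"] by linarith
  moreover have "continuous_on {a..u} d" using cont u by (auto intro: continuous_on_subset)
  ultimately obtain x where x: "a \<le> x" "x \<le> u" "d x = -1/2"
    using IVT2'[of d u "-1/2" a] zero u by auto
  then have "a < x" using zero by (cases "a = x") auto
  then show False using sin_pos[of x] x u by simp
qed

lemma pos_if_sin_pos_left_of_zero: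
  fixes d :: "real \<Rightarrow> real"
  assumes cont: "continuous_on {a..b} d" and zero: "d b = 0"
    and sin_pos: "\<And>v. a \<le> v \<Longrightarrow> v < b \<Longrightarrow> sin (2*pi*d v) > 0"
    and u: "a \<le> u" "u < b"
  shows "d u > 0"
proof (rule ccontr)
  assume "\<not> d u > 0"
  then have "d u < -1/2" using sin_pos[OF u] sin_two_pi_nonpos[of "d u"] by linarith
  moreover have "continuous_on {u..b} d" using cont u by (auto intro: continuous_on_subset)
  ultimately obtain x where x: "u \<le> x" "x \<le> b" "d x = -1/2"
    using IVT'[of d u "-1/2" b] zero u by auto
  then have "x < b" using zero by (cases "b = x") auto
  then show False using sin_pos[of x] x u by simp
qed

text \<open>The chord maps of the vertices i t, - i t and (t - 1) / (t + 1) of the critical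
  triangle on homogeneous coordinates (the last one scaled by t + 1), and the point
  (1 + i u) / (1 - i u) = circ_pt (angle_param u) from which the orbits are followed.\<close>

definition hom_P :: "real \<Rightarrow> complex \<times> complex \<Rightarrow> complex \<times> complex" where
  "hom_P t p = (\<i> * t * snd p - fst p, snd p + \<i> * t * fst p)"

definition hom_Q :: "real \<Rightarrow> complex \<times> complex \<Rightarrow> complex \<times> complex" where
  "hom_Q t p = (- \<i> * t * snd p - fst p, snd p - \<i> * t * fst p)"

definition hom_R :: "real \<Rightarrow> complex \<times> complex \<Rightarrow> complex \<times> complex" where
  "hom_R t p = ((t - 1) * snd p - (t + 1) * fst p, (t + 1) * snd p - (t - 1) * fst p)"

definition hom_start :: "real \<Rightarrow> complex \<times> complex" where
  "hom_start u = (1 + \<i> * u, 1 - \<i> * u)"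

definition angle_param :: "real \<Rightarrow> real" where
  "angle_param u = 1 + arctan u / pi"

lemma hom_sin_eq_gap_poly_1:
  "hom_sin (hom_P t (hom_R t (hom_start u))) (hom_Q t (hom_R t (hom_P t (hom_start u))))
    = (u + 1) * (1 - t)\<^sup>2 * t * (t + 1) * gap_poly_1 u t"
  unfolding hom_sin_def hom_P_def hom_Q_def hom_R_def hom_start_def gap_poly_1_def
  by (simp add: algebra_simps power2_eq_square power3_eq_cube) (simp add: algebra_simps power_def)

lemma hom_sin_eq_gap_poly_2:
  "hom_sin (hom_R t (hom_Q t (hom_start u))) (hom_Q t (hom_R t (hom_P t (hom_start u))))
    = - u * (1 - t)\<^sup>2 * t * (t + 1) * gap_poly_2 u t"
  unfolding hom_sin_def hom_P_def hom_Q_def hom_R_def hom_start_def gap_poly_2_def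
  by (simp add: algebra_simps power2_eq_square power3_eq_cube) (simp add: algebra_simps power_def)

lemma hom_sin_eq_gap_poly_3:
  "hom_sin (hom_R t (hom_Q t (hom_start u))) (hom_P t (hom_R t (hom_P t (hom_start u))))
    = u * (1 - t) * t * (t + 1)\<^sup>2 * gap_poly_3 u t"
  unfolding hom_sin_def hom_P_def hom_Q_def hom_R_def hom_start_def gap_poly_3_def
  by (simp add: algebra_simps power2_eq_square power3_eq_cube) (simp add: algebra_simps power_def)

lemma hom_sin_eq_gap_poly_4:
  "hom_sin (hom_R t (hom_Q t (hom_start u))) (hom_P t (hom_Q t (hom_R t (hom_start u))))
    = (1 - u) * (1 - t) * t * (t + 1) * gap_poly_4 u t"
  unfolding hom_sin_def hom_P_def hom_Q_def hom_R_def hom_start_def gap_poly_4_def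
  by (simp add: algebra_simps power2_eq_square power3_eq_cube) (simp add: algebra_simps power_def)

lemma hom_on_circle_start: "hom_on_circle (hom_start u)"
  and hom_pt_start: "hom_pt (hom_start u) = circ_pt (angle_param u)"
proof -
  have "circ_pt (angle_param u) = circ_pt (arctan u / pi)"
    using circ_pt_add_1[of "arctan u / pi"] by (simp add: angle_param_def add.commute)
  also have "\<dots> = hom_pt (hom_start u)"
    by (simp add: circ_pt_def cis_double_arctan hom_pt_def hom_start_def)
  finally show "hom_pt (hom_start u) = circ_pt (angle_param u)" ..
  then show "hom_on_circle (hom_start u)"
    using one_minus_i_mult_nonzero[of u] by (simp add: hom_on_circle_def hom_start_def)
qed

lemma angle_param_values: "angle_param (-1) = 3/4" "angle_param 0 = 1" "angle_param 1 = 5/4"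
  by (simp_all add: angle_param_def arctan_minus arctan_one)

lemma continuous_on_angle_param: "continuous_on S angle_param"
  unfolding angle_param_def[abs_def] by (intro continuous_intros) auto

lemma angle_param_surj:
  assumes "3/4 \<le> y" "y \<le> 5/4"
  obtains u where "-1 \<le> u" "u \<le> 1" "angle_param u = y"
proof
  define u where "u = tan (pi * (y - 1))"
  have "- (pi/2) < pi * (y - 1)" "pi * (y - 1) < pi/2" using assms pi_gt_zero by (auto simp: field_simps)
  then have au: "arctan u = pi * (y - 1)" unfolding u_def using arctan_tan by blast
  then show "angle_param u = y" unfolding angle_param_def by simp
  have "arctan (-1) \<le> arctan u" "arctan u \<le> arctan 1"
    unfolding au using assms pi_gt_zero by (auto simp: arctan_minus arctan_one field_simps)
  then show "-1 \<le> u" "u \<le> 1" by (simp_all only: arctan_le_iff)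
qed

section \<open>The critical triangle\<close>

lemma circ_pt_3_4: "circ_pt (3/4) = - \<i>"
proof -
  have "circ_pt (3/4) = circ_pt (-1/4 + 1)" by simp
  also have "\<dots> = cis (- (pi/2))" unfolding circ_pt_add_1 by (simp add: circ_pt_def)
  finally show ?thesis by simp
qed

lemma circ_pt_5_4: "circ_pt (5/4) = \<i>"
proof -
  have "circ_pt (5/4) = circ_pt (1/4 + 1)" by simp
  also have "\<dots> = cis (pi/2)" unfolding circ_pt_add_1 by (simp add: circ_pt_def)
  finally show ?thesis by simp
qed

lemma circ_pt_1: "circ_pt 1 = 1"
  using circ_pt_add_1[of 0] by (simp add: circ_pt_def)

lemma circ_pt_7_4: "circ_pt (7/4) = - \<i>" using circ_pt_add_1[of "3/4"] circ_pt_3_4 by simp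

lemma circ_pt_9_4: "circ_pt (9/4) = \<i>" using circ_pt_add_1[of "5/4"] circ_pt_5_4 by simp

lemma circ_pt_2: "circ_pt 2 = 1" using circ_pt_add_1[of 1] circ_pt_1 by simp

lemma chord_map_eqI: "1 - cnj z * v \<noteq> 0 \<Longrightarrow> z - v = w * (1 - cnj z * v) \<Longrightarrow> chord_map z v = w"
  by (simp add: chord_map_def)

lemma chord_lift_eq_half: "chord_slope z (circ_pt x) = 0 \<Longrightarrow> chord_lift z x = x + 1/2"
  by (simp add: chord_lift_def)

lemma chord_lift_gt_half: "chord_slope z (circ_pt x) > 0 \<Longrightarrow> x + 1/2 < chord_lift z x"
  using pi_gt_zero by (simp add: chord_lift_def)

lemma chord_lift_lt_half: "chord_slope z (circ_pt x) < 0 \<Longrightarrow> chord_lift z x < x + 1/2"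
  using pi_gt_zero by (simp add: chord_lift_def divide_neg_pos)

text \<open>A constant rather than an abbreviation, so that simp does not rewrite complex_of_real r0
  into a quotient of complex numbers.\<close>

definition crit_r :: "real \<Rightarrow> real" where
  "crit_r t = (t - 1) / (t + 1)"

locale critical_triangle =
  fixes t :: real
  assumes t_gt: "4/5 < t" and t_lt: "t < 1"
begin

abbreviation "P \<equiv> \<i> * complex_of_real t"

abbreviation "Q \<equiv> - (\<i> * complex_of_real t)"

abbreviation "r0 \<equiv> crit_r t"

abbreviation "R \<equiv> complex_of_real r0"

abbreviation "a0 \<equiv> (t\<^sup>2 - 1) / (t\<^sup>2 + 1)"

abbreviation "b0 \<equiv> 2 * t / (t\<^sup>2 + 1)"

abbreviation "A \<equiv> Complex a0 (- b0)"

abbreviation "B \<equiv> Complex a0 b0"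

abbreviation "gP \<equiv> chord_lift P"

abbreviation "gQ \<equiv> chord_lift Q"

abbreviation "gR \<equiv> chord_lift R"

abbreviation "F \<equiv> tri_lift P Q R"

lemma t_pos: "0 < t" using t_gt by simp

lemma r0_bounds: "-1 < r0" "r0 < 0"
  using t_gt t_lt by (auto simp: crit_r_def field_simps)

lemma norm_vertices: "norm P < 1" "norm Q < 1" "norm R < 1"
  using t_gt t_lt r0_bounds by (simp_all add: norm_mult)

sublocale F: monotone_degree_one "tri_lift P Q R"
  using monotone_degree_one_tri_lift norm_vertices by blast

lemma t_nonzero: "t\<^sup>2 + 1 \<noteq> 0" "t + 1 \<noteq> 0" "1 + 3 * t\<^sup>2 \<noteq> 0" "1 - t \<noteq> 0" "1 - t\<^sup>2 \<noteq> 0"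
proof -
  have "0 \<le> t\<^sup>2" "t\<^sup>2 < 1" using t_gt t_lt by (simp_all add: abs_square_less_1)
  then show "t\<^sup>2 + 1 \<noteq> 0" "t + 1 \<noteq> 0" "1 + 3 * t\<^sup>2 \<noteq> 0" "1 - t \<noteq> 0" "1 - t\<^sup>2 \<noteq> 0"
    using t_gt t_lt by linarith+
qed

lemma chord_map_R_i: "chord_map R \<i> = A"
  and chord_map_R_minus_i: "chord_map R (- \<i>) = B"
  and chord_map_Q_1: "chord_map Q 1 = A"
  and chord_map_P_1: "chord_map P 1 = B"
proof -
  have e: "a0 - b0 * r0 = r0" "b0 + a0 * r0 = 1" "a0 - b0 * t = -1" "b0 + a0 * t = t"
    using t_nonzero by (simp_all add: crit_r_def divide_simps) (simp_all add: algebra_simps power2_eq_square)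
  show "chord_map R \<i> = A"
    by (rule chord_map_eqI) (use e in \<open>simp_all add: complex_eq_iff\<close>)
  show "chord_map R (- \<i>) = B"
    by (rule chord_map_eqI) (use e in \<open>simp_all add: complex_eq_iff\<close>)
  show "chord_map Q 1 = A"
    by (rule chord_map_eqI) (use e t_pos in \<open>simp_all add: complex_eq_iff algebra_simps\<close>)
  show "chord_map P 1 = B"
    by (rule chord_map_eqI) (use e t_pos in \<open>simp_all add: complex_eq_iff algebra_simps\<close>)
qed

lemma chord_map_Q_A: "chord_map Q A = 1" and chord_map_R_A: "chord_map R A = \<i>"
  and chord_map_P_B: "chord_map P B = 1" and chord_map_R_B: "chord_map R B = - \<i>"
  using chord_map_involution[OF norm_vertices(2), of 1] chord_map_involution[OF norm_vertices(3), of \<i>]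
    chord_map_involution[OF norm_vertices(1), of 1] chord_map_involution[OF norm_vertices(3), of "- \<i>"]
  by (simp_all add: chord_map_R_i chord_map_R_minus_i chord_map_Q_1 chord_map_P_1)

lemma chord_slopes_minus_i: "chord_slope P (- \<i>) = 0" "chord_slope Q (- \<i>) = 0" "chord_slope R (- \<i>) = - r0"
  and chord_slopes_i: "chord_slope P \<i> = 0" "chord_slope Q \<i> = 0" "chord_slope R \<i> = r0"
  and chord_slopes_1: "chord_slope P 1 = - t" "chord_slope Q 1 = t" "chord_slope R 1 = 0"
  by (simp_all add: chord_slope_def)

lemma chord_slopes_B: "chord_slope P B = t" "chord_slope Q B = t * (t\<^sup>2 - 1) / (1 + 3 * t\<^sup>2)" "chord_slope R B = r0"
  and chord_slopes_A: "chord_slope P A = t * (1 - t\<^sup>2) / (1 + 3 * t\<^sup>2)" "chord_slope Q A = - t" "chord_slope R A = - r0"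
proof -
  have slope: "chord_slope P (Complex a b) = - t * a / (1 - t * b)"
    "chord_slope Q (Complex a b) = t * a / (1 + t * b)"
    "chord_slope R (Complex a b) = r0 * b / (1 - r0 * a)" for a b
    by (simp_all add: chord_slope_def)
  show "chord_slope P B = t" "chord_slope Q B = t * (t\<^sup>2 - 1) / (1 + 3 * t\<^sup>2)"
    "chord_slope P A = t * (1 - t\<^sup>2) / (1 + 3 * t\<^sup>2)" "chord_slope Q A = - t"
    unfolding slope using t_nonzero by (simp_all add: divide_simps) (simp_all add: algebra_simps power2_eq_square)
  show "chord_slope R B = r0" "chord_slope R A = - r0"
    unfolding slope using t_nonzero t_pos
    by (simp_all add: crit_r_def divide_simps, simp_all add: algebra_simps power2_eq_square, (smt (verit) mult_pos_pos)+)
qed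

lemma circ_pt_lifts:
  "circ_pt (gP x) = chord_map P (circ_pt x)" "circ_pt (gQ x) = chord_map Q (circ_pt x)"
  "circ_pt (gR x) = chord_map R (circ_pt x)"
  using circ_pt_chord_lift norm_vertices by auto

lemma min_slope_at_A: "chord_slope Q A \<le> chord_slope P A" "chord_slope Q A \<le> chord_slope R A"
proof -
  have "t\<^sup>2 \<le> 1" using t_gt t_lt by (simp add: abs_square_le_1)
  then have "0 \<le> t * (1 - t\<^sup>2) / (1 + 3 * t\<^sup>2)" using t_pos by (simp add: add_pos_nonneg)
  then show "chord_slope Q A \<le> chord_slope P A" using chord_slopes_A t_pos by simp
  show "chord_slope Q A \<le> chord_slope R A" using chord_slopes_A t_pos r0_bounds by simp
qed

lemma min_slope_at_B: "chord_slope R B \<le> chord_slope P B" "chord_slope R B \<le> chord_slope Q B"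
proof -
  show "chord_slope R B \<le> chord_slope P B" using chord_slopes_B t_pos r0_bounds by simp
  have "t * (t\<^sup>2 - 1) / (1 + 3 * t\<^sup>2) - r0 = (1 - t)\<^sup>2 * (1 + t\<^sup>2) / ((t + 1) * (1 + 3 * t\<^sup>2))"
    using t_nonzero by (simp add: crit_r_def divide_simps) (simp add: algebra_simps power2_eq_square)
  moreover have "0 \<le> (1 - t)\<^sup>2 * (1 + t\<^sup>2) / ((t + 1) * (1 + 3 * t\<^sup>2))"
    using t_pos by (simp add: add_pos_nonneg)
  ultimately show "chord_slope R B \<le> chord_slope Q B" using chord_slopes_B by simp
qed

lemma gP_3_4: "gP (3/4) = 5/4" and gQ_3_4: "gQ (3/4) = 5/4"
  and gP_7_4: "gP (7/4) = 9/4" and gQ_7_4: "gQ (7/4) = 9/4" and gQ_5_4: "gQ (5/4) = 7/4"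
  using chord_lift_eq_half chord_slopes_minus_i chord_slopes_i
  by (simp_all add: circ_pt_3_4 circ_pt_7_4 circ_pt_5_4)

lemma gR_3_4: "5/4 < gR (3/4)" "gR (3/4) < 7/4" "circ_pt (gR (3/4)) = B"
  using chord_lift_gt_half[of R "3/4"] chord_lift_bounds[where x="3/4" and z=R] r0_bounds
  by (simp_all add: circ_pt_3_4 chord_slopes_minus_i circ_pt_lifts chord_map_R_minus_i)

lemma gR_5_4: "5/4 < gR (5/4)" "gR (5/4) < 7/4" "circ_pt (gR (5/4)) = A"
  using chord_lift_lt_half[of R "5/4"] chord_lift_bounds[where x="5/4" and z=R] r0_bounds
  by (simp_all add: circ_pt_5_4 chord_slopes_i circ_pt_lifts chord_map_R_i)

lemma gP_1: "1 < gP 1" "gP 1 < 3/2" "circ_pt (gP 1) = B"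
  using chord_lift_lt_half[of P 1] chord_lift_bounds[where x=1 and z=P] t_pos
  by (simp_all add: circ_pt_1 chord_slopes_1 circ_pt_lifts chord_map_P_1)

lemma gQ_1: "3/2 < gQ 1" "gQ 1 < 2" "circ_pt (gQ 1) = A"
  using chord_lift_gt_half[of Q 1] chord_lift_bounds[where x=1 and z=Q] t_pos
  by (simp_all add: circ_pt_1 chord_slopes_1 circ_pt_lifts chord_map_Q_1)

lemma gQ_gR_5_4: "gQ (gR (5/4)) = 2"
  by (rule circ_pt_eq_imp_eq)
    (use gR_5_4 chord_lift_bounds[where x="gR (5/4)" and z=Q] in
      \<open>simp_all add: circ_pt_lifts chord_map_Q_A circ_pt_2\<close>)

lemma gP_gR_3_4: "gP (gR (3/4)) = 2"
  by (rule circ_pt_eq_imp_eq)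
    (use gR_3_4 chord_lift_bounds[where x="gR (3/4)" and z=P] in
      \<open>simp_all add: circ_pt_lifts chord_map_P_B circ_pt_2\<close>)

lemma gR_gP_1: "gR (gP 1) = 7/4"
  by (rule circ_pt_eq_imp_eq)
    (use gP_1 chord_lift_bounds[where x="gP 1" and z=R] in
      \<open>simp_all add: circ_pt_lifts chord_map_R_B circ_pt_7_4\<close>)

lemma gR_gQ_1: "gR (gQ 1) = 9/4"
  by (rule circ_pt_eq_imp_eq)
    (use gQ_1 chord_lift_bounds[where x="gQ 1" and z=R] in
      \<open>simp_all add: circ_pt_lifts chord_map_R_A circ_pt_9_4\<close>)

lemma gP_1_eq_gR_3_4: "gP 1 = gR (3/4)"
  by (rule circ_pt_eq_imp_eq) (use gP_1 gR_3_4 in auto)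

lemma F_3_4: "F (3/4) = 5/4"
proof -
  have "F (3/4) = gP (3/4)"
    by (rule tri_lift_eq_chord_lift(1)) (use r0_bounds in \<open>simp_all add: circ_pt_3_4 chord_slopes_minus_i\<close>)
  then show ?thesis using gP_3_4 by simp
qed

lemma F_7_4: "F (7/4) = 9/4"
  using F_3_4 tri_lift_add_int[of 1 P Q R "3/4"] by simp

lemma F_5_4: "F (5/4) = gR (5/4)"
  by (rule tri_lift_eq_chord_lift(3)) (use r0_bounds in \<open>simp_all add: circ_pt_5_4 chord_slopes_i\<close>)

lemma F_F_5_4: "F (F (5/4)) = 2"
proof -
  have "F (gR (5/4)) = gQ (gR (5/4))"
    by (rule tri_lift_eq_chord_lift(2)) (use min_slope_at_A in \<open>simp_all add: gR_5_4(3)\<close>)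
  then show ?thesis by (simp only: F_5_4 gQ_gR_5_4)
qed

lemma F_1: "F 1 = gP 1"
  by (rule tri_lift_eq_chord_lift(1)) (use t_pos in \<open>simp_all add: circ_pt_1 chord_slopes_1\<close>)

lemma F_F_F_1: "F (F (F 1)) = 9/4"
proof -
  have "F (gP 1) = gR (gP 1)"
    by (rule tri_lift_eq_chord_lift(3)) (use min_slope_at_B in \<open>simp_all add: gP_1(3)\<close>)
  then show ?thesis by (simp only: F_1 gR_gP_1 F_7_4)
qed

text \<open>The compositions compared below agree at the end points u = -1, 0, 0, 1 of the four
  parameter ranges, i.e. at y = 3/4, 1, 1, 5/4.\<close>

lemma orbits_meet:
  "gQ (gR (gP (3/4))) = gP (gR (3/4))" "gQ (gR (gP 1)) = gR (gQ 1)"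
  "gP (gR (gP 1)) = gR (gQ 1)" "gP (gQ (gR (5/4))) = gR (gQ (5/4))"
proof -
  show "gQ (gR (gP (3/4))) = gP (gR (3/4))" by (simp only: gP_3_4 gQ_gR_5_4 gP_gR_3_4)
  show "gQ (gR (gP 1)) = gR (gQ 1)" by (simp only: gR_gP_1 gQ_7_4 gR_gQ_1)
  show "gP (gR (gP 1)) = gR (gQ 1)" by (simp only: gR_gP_1 gP_7_4 gR_gQ_1)
  have "gP (gQ (gR (5/4))) = gP 1 + 1" using chord_lift_add_1[of P 1] by (simp only: gQ_gR_5_4) simp
  moreover have "gR (gQ (5/4)) = gR (3/4) + 1" using chord_lift_add_1[of R "3/4"] by (simp only: gQ_5_4) simp
  ultimately show "gP (gQ (gR (5/4))) = gR (gQ (5/4))" using gP_1_eq_gR_3_4 by simp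
qed

lemma hom_steps:
  assumes "hom_on_circle p \<and> circ_pt y = hom_pt p"
  shows hom_step_P: "hom_on_circle (hom_P t p) \<and> circ_pt (gP y) = hom_pt (hom_P t p)"
    and hom_step_Q: "hom_on_circle (hom_Q t p) \<and> circ_pt (gQ y) = hom_pt (hom_Q t p)"
    and hom_step_R: "hom_on_circle (hom_R t p) \<and> circ_pt (gR y) = hom_pt (hom_R t p)"
proof -
  have "hom_P t p = (1 * (P * snd p - fst p), 1 * (snd p - cnj P * fst p))"
    "hom_Q t p = (1 * (Q * snd p - fst p), 1 * (snd p - cnj Q * fst p))"
    by (simp_all add: hom_P_def hom_Q_def)
  moreover have c: "complex_of_real t + 1 \<noteq> 0"
    using t_nonzero(2) by (metis of_real_1 of_real_add of_real_eq_0_iff)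
  then have "(complex_of_real t + 1) * R = complex_of_real t - 1"
    by (simp add: crit_r_def field_simps)
  then have "(of_real t + 1) * (R * snd p - fst p) = (of_real t - 1) * snd p - (of_real t + 1) * fst p"
    "(of_real t + 1) * (snd p - cnj R * fst p) = (of_real t + 1) * snd p - (of_real t - 1) * fst p"
    by (simp_all only: complex_cnj_complex_of_real right_diff_distrib mult.assoc[symmetric])
  then have "hom_R t p = ((of_real t + 1) * (R * snd p - fst p), (of_real t + 1) * (snd p - cnj R * fst p))"
    by (simp add: hom_R_def)
  ultimately show "hom_on_circle (hom_P t p) \<and> circ_pt (gP y) = hom_pt (hom_P t p)"
    "hom_on_circle (hom_Q t p) \<and> circ_pt (gQ y) = hom_pt (hom_Q t p)"
    "hom_on_circle (hom_R t p) \<and> circ_pt (gR y) = hom_pt (hom_R t p)"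
    using chord_map_hom[OF norm_vertices(1) _ conjunct1[OF assms], of 1]
      chord_map_hom[OF norm_vertices(2) _ conjunct1[OF assms], of 1]
      chord_map_hom[OF norm_vertices(3) c conjunct1[OF assms]]
      assms circ_pt_lifts by simp_all
qed

lemmas hom_orbit_intros = hom_step_P hom_step_Q hom_step_R
  conjI[OF hom_on_circle_start hom_pt_start[symmetric]]

lemma gQ_gR_gP_less_gP_gR:
  assumes "-1 < u" "u \<le> -1/2" shows "gQ (gR (gP (angle_param u))) < gP (gR (angle_param u))"
proof -
  let ?d = "\<lambda>u. gP (gR (angle_param u)) - gQ (gR (gP (angle_param u)))"
  have sin_pos: "sin (2*pi*?d v) > 0" if v: "-1 < v" "v \<le> -1/2" for v
  proof -
    have pos: "0 < (v + 1) * (1 - t)\<^sup>2 * t * (t + 1) * gap_poly_1 v t"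
      using v t_gt t_lt gap_poly_1_pos[of v t] by (intro mult_pos_pos) auto
    show ?thesis
      by (rule sin_pos_if_hom_sin_pos, (rule hom_orbit_intros)+) (use pos in \<open>simp only: hom_sin_eq_gap_poly_1\<close>)
  qed
  have zero: "?d (-1) = 0" by (simp only: angle_param_values orbits_meet(1) diff_self)
  have cont: "continuous_on {-1..-1/2} ?d"
    by (intro continuous_intros continuous_on_chord_lift_comp continuous_on_angle_param norm_vertices)
  have "?d u > 0" by (rule pos_if_sin_pos_right_of_zero[OF cont zero sin_pos assms])
  then show ?thesis by simp
qed

lemma gQ_gR_gP_less_gR_gQ:
  assumes "-1/2 \<le> u" "u < 0" shows "gQ (gR (gP (angle_param u))) < gR (gQ (angle_param u))"
proof -
  let ?d = "\<lambda>u. gR (gQ (angle_param u)) - gQ (gR (gP (angle_param u)))"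
  have sin_pos: "sin (2*pi*?d v) > 0" if v: "-1/2 \<le> v" "v < 0" for v
  proof -
    have pos: "0 < - v * (1 - t)\<^sup>2 * t * (t + 1) * gap_poly_2 v t"
      using v t_gt t_lt gap_poly_2_pos[of v t] by (intro mult_pos_pos) auto
    show ?thesis
      by (rule sin_pos_if_hom_sin_pos, (rule hom_orbit_intros)+) (use pos in \<open>simp only: hom_sin_eq_gap_poly_2\<close>)
  qed
  have zero: "?d 0 = 0" by (simp only: angle_param_values orbits_meet(2) diff_self)
  have cont: "continuous_on {-1/2..0} ?d"
    by (intro continuous_intros continuous_on_chord_lift_comp continuous_on_angle_param norm_vertices)
  have "?d u > 0" by (rule pos_if_sin_pos_left_of_zero[OF cont zero sin_pos assms])
  then show ?thesis by simp
qed

lemma gP_gR_gP_less_gR_gQ: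
  assumes "0 < u" "u \<le> 1/2" shows "gP (gR (gP (angle_param u))) < gR (gQ (angle_param u))"
proof -
  let ?d = "\<lambda>u. gR (gQ (angle_param u)) - gP (gR (gP (angle_param u)))"
  have sin_pos: "sin (2*pi*?d v) > 0" if v: "0 < v" "v \<le> 1/2" for v
  proof -
    have pos: "0 < v * (1 - t) * t * (t + 1)\<^sup>2 * gap_poly_3 v t"
      using v t_gt t_lt gap_poly_3_pos[of v t] by (intro mult_pos_pos) auto
    show ?thesis
      by (rule sin_pos_if_hom_sin_pos, (rule hom_orbit_intros)+) (use pos in \<open>simp only: hom_sin_eq_gap_poly_3\<close>)
  qed
  have zero: "?d 0 = 0" by (simp only: angle_param_values orbits_meet(3) diff_self)
  have cont: "continuous_on {0..1/2} ?d"
    by (intro continuous_intros continuous_on_chord_lift_comp continuous_on_angle_param norm_vertices)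
  have "?d u > 0" by (rule pos_if_sin_pos_right_of_zero[OF cont zero sin_pos assms])
  then show ?thesis by simp
qed

lemma gP_gQ_gR_less_gR_gQ:
  assumes "1/2 \<le> u" "u < 1" shows "gP (gQ (gR (angle_param u))) < gR (gQ (angle_param u))"
proof -
  let ?d = "\<lambda>u. gR (gQ (angle_param u)) - gP (gQ (gR (angle_param u)))"
  have sin_pos: "sin (2*pi*?d v) > 0" if v: "1/2 \<le> v" "v < 1" for v
  proof -
    have pos: "0 < (1 - v) * (1 - t) * t * (t + 1) * gap_poly_4 v t"
      using v t_gt t_lt gap_poly_4_pos[of v t] by (intro mult_pos_pos) auto
    show ?thesis
      by (rule sin_pos_if_hom_sin_pos, (rule hom_orbit_intros)+) (use pos in \<open>simp only: hom_sin_eq_gap_poly_4\<close>)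
  qed
  have zero: "?d 1 = 0" by (simp only: angle_param_values orbits_meet(4) diff_self)
  have cont: "continuous_on {1/2..1} ?d"
    by (intro continuous_intros continuous_on_chord_lift_comp continuous_on_angle_param norm_vertices)
  have "?d u > 0" by (rule pos_if_sin_pos_left_of_zero[OF cont zero sin_pos assms])
  then show ?thesis by simp
qed

lemma F_pow5_le_chord_lifts:
  assumes "z1 \<in> {P, Q, R}" "z2 \<in> {P, Q, R}" "z3 \<in> {P, Q, R}" "z4 \<in> {P, Q, R}" "z5 \<in> {P, Q, R}"
  shows "(F ^^ 5) y \<le> chord_lift z1 (chord_lift z2 (chord_lift z3 (chord_lift z4 (chord_lift z5 y))))"
proof -
  have step: "F a \<le> chord_lift z b" if "z \<in> {P, Q, R}" "a \<le> b" for z a b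
  proof -
    have "F a \<le> chord_lift z a" using that(1) tri_lift_le by auto
    also have "\<dots> \<le> chord_lift z b"
      using that norm_vertices strict_mono_chord_lift by (auto simp: strict_mono_less_eq)
    finally show ?thesis .
  qed
  have "(F ^^ 5) y = F (F (F (F (F y))))" by (simp add: numeral_eq_Suc)
  also have "\<dots> \<le> chord_lift z1 (chord_lift z2 (chord_lift z3 (chord_lift z4 (chord_lift z5 y))))"
    by (intro step assms order_refl)
  finally show ?thesis .
qed

text \<open>Since chord lifts are involutions up to the shift by 1, the five-letter word
  z1 z2 w1 w2 w3 is at most y + 2 as soon as the three-letter word w1 w2 w3 lies below z2 z1.\<close>

lemma F_pow5_bound:
  fixes y :: real
  assumes "z1 \<in> {P, Q, R}" "z2 \<in> {P, Q, R}" "w1 \<in> {P, Q, R}" "w2 \<in> {P, Q, R}" "w3 \<in> {P, Q, R}"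
  defines "Z \<equiv> chord_lift w1 (chord_lift w2 (chord_lift w3 y))"
  shows "Z \<le> chord_lift z2 (chord_lift z1 y) \<Longrightarrow> (F ^^ 5) y \<le> y + 2"
    and "Z < chord_lift z2 (chord_lift z1 y) \<Longrightarrow> (F ^^ 5) y < y + 2"
proof -
  have word: "(F ^^ 5) y \<le> chord_lift z1 (chord_lift z2 Z)"
    unfolding Z_def using assms by (intro F_pow5_le_chord_lifts)
  have z: "norm z1 < 1" "norm z2 < 1" using assms(1,2) norm_vertices by auto
  show "Z \<le> chord_lift z2 (chord_lift z1 y) \<Longrightarrow> (F ^^ 5) y \<le> y + 2"
    using word chord_lift_pair_le[OF z] by (meson order_trans)
  show "Z < chord_lift z2 (chord_lift z1 y) \<Longrightarrow> (F ^^ 5) y < y + 2"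
    using word chord_lift_pair_less[OF z] by (meson order_le_less_trans)
qed

lemma F_pow5_window:
  assumes "3/4 \<le> y" "y \<le> 5/4"
  shows "(F ^^ 5) y \<le> y + 2 \<and> ((F ^^ 5) y < y + 2 \<or> y = 3/4 \<or> y = 1 \<or> y = 5/4)"
proof -
  obtain u where u: "-1 \<le> u" "u \<le> 1" "angle_param u = y" using angle_param_surj assms by blast
  note bound = F_pow5_bound[where y = "angle_param u", simplified]
  consider "u = -1" | "-1 < u" "u \<le> -1/2" | "-1/2 \<le> u" "u < 0" | "u = 0" | "0 < u" "u \<le> 1/2"
    | "1/2 \<le> u" "u < 1" | "u = 1"
    using u by linarith
  then show ?thesis
  proof cases
    case 1
    then have y: "y = 3/4" using u(3) angle_param_values by simp
    have "(F ^^ 5) (3/4) \<le> 3/4 + 2" using 1 bound(1)[of R P Q R P] orbits_meet(1) by (simp add: angle_param_values)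
    then show ?thesis by (simp add: y)
  next
    case 2
    then show ?thesis using u bound(2)[of R P Q R P] gQ_gR_gP_less_gP_gR by force
  next
    case 3
    then show ?thesis using u bound(2)[of Q R Q R P] gQ_gR_gP_less_gR_gQ by force
  next
    case 4
    then have y: "y = 1" using u(3) angle_param_values by simp
    have "(F ^^ 5) (1) \<le> 1 + 2" using 4 bound(1)[of Q R Q R P] orbits_meet(2) by (simp add: angle_param_values)
    then show ?thesis by (simp add: y)
  next
    case 5
    then show ?thesis using u bound(2)[of Q R P R P] gP_gR_gP_less_gR_gQ by force
  next
    case 6
    then show ?thesis using u bound(2)[of Q R P Q R] gP_gQ_gR_less_gR_gQ by force
  next
    case 7
    then have y: "y = 5/4" using u(3) angle_param_values by simp
    have "(F ^^ 5) (5/4) \<le> 5/4 + 2" using 7 bound(1)[of Q R P Q R] orbits_meet(4) by (simp add: angle_param_values)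
    then show ?thesis by (simp add: y)
  qed
qed

lemma F_orbit_enters_window: "\<exists>j\<le>2. \<exists>m::int. 3/4 \<le> (F ^^ j) x - m \<and> (F ^^ j) x - m \<le> 5/4"
proof -
  define m0 where "m0 = \<lfloor>x - 3/4\<rfloor>"
  define x' where "x' = x - real_of_int m0"
  have x': "3/4 \<le> x'" "x' < 7/4"
    unfolding x'_def m0_def using of_int_floor_le[of "x - 3/4"] real_of_int_floor_add_one_gt[of "x - 3/4"]
    by linarith+
  have orbit: "(F ^^ j) x = (F ^^ j) x' + real_of_int m0" for j
    using F.funpow_add_int[of j x' m0] by (simp add: x'_def)
  have F_less: "a < b \<Longrightarrow> F a < F b" for a b
    using strict_mono_tri_lift[OF norm_vertices] by (simp add: strict_mono_less)
  consider "x' \<le> 5/4" | "5/4 < x'" "7/4 \<le> F x'" | "5/4 < x'" "F x' < 7/4" by linarith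
  then show ?thesis
  proof cases
    case 1
    then show ?thesis using x' orbit[of 0] by (intro exI[of _ 0] conjI exI[of _ m0]) auto
  next
    case 2
    have "F x' < 9/4" using F_less[OF x'(2)] F_7_4 by simp
    then show ?thesis using 2 orbit[of 1] by (intro exI[of _ 1] conjI exI[of _ "m0 + 1"]) auto
  next
    case 3
    have "F (F x') < 9/4" using F_less[OF 3(2)] F_7_4 by simp
    moreover have "2 < F (F x')" using F_less[OF F_less[OF 3(1)]] F_F_5_4 by simp
    moreover have "(F ^^ 2) x = F (F x') + real_of_int m0" using orbit[of 2] by (simp add: numeral_eq_Suc)
    ultimately show ?thesis by (intro exI[of _ 2] conjI exI[of _ "m0 + 1"]) auto
  qed
qed

lemma F_pow5_le: "(F ^^ 5) x \<le> x + 2"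
  and F_pow5_ge_imp: "(F ^^ 5) x \<ge> x + 2 \<Longrightarrow>
    \<exists>j\<le>2. \<exists>m::int. (F ^^ j) x - m = 3/4 \<or> (F ^^ j) x - m = 1 \<or> (F ^^ j) x - m = 5/4"
proof -
  obtain j and m :: int where jm: "j \<le> 2" "3/4 \<le> (F ^^ j) x - m" "(F ^^ j) x - m \<le> 5/4"
    using F_orbit_enters_window by blast
  define y where "y = (F ^^ j) x - m"
  have "(F ^^ 5) ((F ^^ j) x) = (F ^^ 5) y - y + (F ^^ j) x"
    using F.funpow_add_int[of 5 y m] by (simp add: y_def)
  then have iff: "(F ^^ 5) x < x + 2 \<longleftrightarrow> (F ^^ 5) y < y + 2" "(F ^^ 5) x \<le> x + 2 \<longleftrightarrow> (F ^^ 5) y \<le> y + 2"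
    using F.funpow_orbit_le_iff[OF strict_mono_tri_lift[OF norm_vertices], of 5 j x 2]
    by (simp_all add: diff_le_eq diff_less_eq ac_simps)
  have window: "(F ^^ 5) y \<le> y + 2 \<and> ((F ^^ 5) y < y + 2 \<or> y = 3/4 \<or> y = 1 \<or> y = 5/4)"
    using F_pow5_window[OF jm(2,3)[folded y_def]] .
  show "(F ^^ 5) x \<le> x + 2" using iff window by simp
  show "(F ^^ 5) x \<ge> x + 2 \<Longrightarrow> \<exists>j\<le>2. \<exists>m::int. (F ^^ j) x - m = 3/4 \<or> (F ^^ j) x - m = 1 \<or> (F ^^ j) x - m = 5/4"
    using iff window jm(1) unfolding y_def by fastforce
qed

end

section \<open>The perturbed triangle\<close>

locale perturbed_triangle = critical_triangle +
  fixes r' :: real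
  assumes r'_gt: "-1 < r'" and r'_lt: "r' < r0"
begin

abbreviation "R' \<equiv> complex_of_real r'"

abbreviation "F' \<equiv> tri_lift P Q R'"

lemma norm_R': "norm R' < 1" using r'_gt r'_lt r0_bounds by simp

sublocale F': monotone_degree_one "tri_lift P Q R'"
  using monotone_degree_one_tri_lift norm_vertices norm_R' by blast

lemma strict_mono_F': "strict_mono F'"
  using strict_mono_tri_lift norm_vertices norm_R' by blast

lemma R_in_hull: "R \<in> convex hull {P, Q, R'}"
proof -
  define \<alpha> where "\<alpha> = r0 / r'"
  have \<alpha>: "0 < \<alpha>" "\<alpha> < 1" "\<alpha> * r' = r0" unfolding \<alpha>_def using r0_bounds r'_lt by (auto simp: field_simps)
  have "R = ((1 - \<alpha>) / 2) *\<^sub>R P + ((1 - \<alpha>) / 2) *\<^sub>R Q + \<alpha> *\<^sub>R R'"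
    using \<alpha>(3) by (simp add: scaleR_conv_of_real flip: of_real_mult)
  then show ?thesis unfolding convex_hull_3 using \<alpha> by (intro CollectI exI[of _ "(1 - \<alpha>) / 2"] exI[of _ \<alpha>]) auto
qed

lemma F'_le_F: "F' x \<le> F x"
proof -
  let ?s = "\<lambda>z. chord_slope z (circ_pt x)"
  have S: "finite {P, Q, R'}" "{P, Q, R'} \<noteq> {}" "{P, Q, R'} \<subseteq> ball 0 1"
    using norm_vertices norm_R' by auto
  have "(MIN z\<in>{P, Q, R'}. ?s z) \<le> ?s z" if "z \<in> convex hull {P, Q, R'}" for z
    by (rule chord_slope_Min_le_hull[OF S circ_pt_norm that])
  moreover have "P \<in> convex hull {P, Q, R'}" "Q \<in> convex hull {P, Q, R'}"
    by (auto intro: hull_inc)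
  ultimately have "(MIN z\<in>{P, Q, R'}. ?s z) \<le> (MIN z\<in>{P, Q, R}. ?s z)"
    using R_in_hull by simp
  then show ?thesis unfolding tri_lift_eq
    using pi_gt_zero by (simp add: divide_right_mono arctan_monotone')
qed

lemma F'_5_4_less: "F' (5/4) < F (5/4)"
proof -
  have "chord_lift R' (5/4) < gR (5/4)"
    unfolding chord_lift_def circ_pt_5_4 using r'_lt pi_gt_zero
    by (simp add: chord_slope_def divide_strict_right_mono arctan_monotone)
  then show ?thesis using tri_lift_le(3)[of P Q R' "5/4"] F_5_4 by simp
qed

lemma F'_funpow_le: "(F' ^^ n) x \<le> (F ^^ n) x"
proof (induction n)
  case (Suc n)
  have "F' ((F' ^^ n) x) \<le> F ((F' ^^ n) x)" by (rule F'_le_F)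
  also have "\<dots> \<le> F ((F ^^ n) x)" using Suc strict_mono_tri_lift[OF norm_vertices] by (simp add: strict_mono_less_eq)
  finally show ?case by simp
qed simp

text \<open>Along an orbit with (F' ^^ 5) z \<ge> z + 2 both maps agree, since F' \<le> F and F ^^ 5 \<le> id + 2.\<close>

lemma orbits_agree:
  assumes ge: "(F' ^^ 5) z \<ge> z + 2" and i: "i \<le> 5"
  shows "(F' ^^ i) z = (F ^^ i) z"
proof -
  have split: "(f ^^ 5) z = (f ^^ (5 - i)) ((f ^^ i) z)" for f :: "real \<Rightarrow> real"
    using i by (metis funpow_add le_add_diff_inverse2 comp_apply)
  have mono: "strict_mono (F ^^ (5 - i))" by (rule strict_mono_funpow[OF strict_mono_tri_lift[OF norm_vertices]])
  have "(F ^^ (5 - i)) ((F' ^^ i) z) \<le> (F ^^ (5 - i)) ((F ^^ i) z)"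
    using F'_funpow_le mono by (simp add: strict_mono_less_eq)
  moreover have "(F' ^^ (5 - i)) ((F' ^^ i) z) \<le> (F ^^ (5 - i)) ((F' ^^ i) z)" by (rule F'_funpow_le)
  moreover have "(F ^^ 5) z \<le> z + 2" by (rule F_pow5_le)
  ultimately have "(F ^^ (5 - i)) ((F' ^^ i) z) = (F ^^ (5 - i)) ((F ^^ i) z)"
    using ge split[of F] split[of F'] by linarith
  then show ?thesis using mono by (simp add: strict_mono_eq)
qed

lemma F'_pow5_less: "(F' ^^ 5) x < x + 2"
proof (rule ccontr)
  assume "\<not> (F' ^^ 5) x < x + 2"
  then have ge: "(F' ^^ 5) x \<ge> x + 2" by simp
  then have "(F ^^ 5) x \<ge> x + 2" using F'_funpow_le[of 5 x] by linarith
  then obtain j and m :: int where j: "j \<le> 2"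
    and m: "(F ^^ j) x - m = 3/4 \<or> (F ^^ j) x - m = 1 \<or> (F ^^ j) x - m = 5/4"
    using F_pow5_ge_imp by blast
  define z where "z = (F' ^^ j) x"
  have z: "z = (F ^^ j) x" unfolding z_def using orbits_agree[OF ge] j by simp
  have "\<not> (F' ^^ 5) ((F' ^^ j) x) < (F' ^^ j) x + 2"
    using F'.funpow_orbit_le_iff(2)[OF strict_mono_F', of 5 j x 2] ge by simp
  then have "(F' ^^ 5) z \<ge> z + 2" by (simp add: z_def)
  note agree = orbits_agree[OF this]
  have step: "F' ((F' ^^ i) z) = F ((F' ^^ i) z)" if "i \<le> 4" for i
    using agree[of i] agree[of "Suc i"] that by simp
  have F'_int: "F' (5/4 + real_of_int k) < F (5/4 + real_of_int k)" for k
    using F'_5_4_less F'.funpow_add_int[of 1 "5/4" k] F.funpow_add_int[of 1 "5/4" k] by simp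
  consider "z = 5/4 + real_of_int m" | "z = 3/4 + real_of_int m" | "z = 1 + real_of_int m"
    using m z by (auto simp: algebra_simps)
  then show False
  proof cases
    case 1
    then show False using step[of 0] F'_int[of m] by simp
  next
    case 2
    then have "(F' ^^ 1) z = 5/4 + real_of_int m"
      using agree[of 1] F.funpow_add_int[of 1 "3/4" m] F_3_4 by simp
    then show False using step[of 1] F'_int[of m] by simp
  next
    case 3
    then have "(F' ^^ 3) z = (F ^^ 3) 1 + real_of_int m" using agree[of 3] F.funpow_add_int[of 3 1 m] by simp
    also have "(F ^^ 3) 1 = 5/4 + 1" using F_F_F_1 by (simp add: numeral_eq_Suc)
    finally have "(F' ^^ 3) z = 5/4 + real_of_int (m + 1)" by simp
    then show False using step[of 3] F'_int[of "m + 1"] by simp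
  qed
qed

lemma rot_num_psi_less: "rot_num (psi (convex hull {P, Q, R'})) < 2 / 5"
proof -
  have "circle_lift (psi (convex hull {P, Q, R'})) = F'" "continuous_on UNIV F'"
    using circle_lift_psi_triangle continuous_on_tri_lift norm_vertices norm_R' by auto
  then show ?thesis
    using rot_num_less[OF F'.monotone_degree_one_axioms, of "psi (convex hull {P, Q, R'})" 5 2] F'_pow5_less
    by simp
qed

end

theorem lemma6p16:
  fixes t r' :: real
  assumes "0.8 < t" and "t < 1"
    and "-1 < r'" and "r' < (t - 1) / (t + 1)"
  shows "rot_num (psi (convex hull {\<i> * complex_of_real t, - \<i> * complex_of_real t,
                                    complex_of_real r'})) < 2 / 5"
proof -
  interpret perturbed_triangle t r'
    using assms by unfold_locales (auto simp: crit_r_def)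
  show ?thesis using rot_num_psi_less by simp
qed

end
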